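(* Let $N\ge1$, $p\in[1,\infty]$, and equip $\mathbb{R}^N$ with the $\ell^p$-metric. For every subset $F$ of $\mathbb{R}^N$ the following are equivalent: (1) $\dim_AF=\dim_A\mathbb{R}^N$; (2) $[0,1]^N\in\mathrm{pc}(F)$; (3) $[0,1]^N\in\mathrm{tpc}(F)$; (4) $[0,1]^N\in\mathrm{kpc}(F)$; (5) $F$ satisfies the asymptotic Steinhaus property for $[0,1]^N$.
   Context: All subsets carry the $\ell^p$-metric. $d_{GH}$ is the Gromov–Hausdorff distance and $uA$ ($u>0$) denotes $A$ with metric multiplied by $u$. $\dim_A Y$ (Assouad dimension) is the infimum of $\beta>0$ for which there is $C>0$ such that every bounded $S\subset Y$ can be covered, for every $r>0$, by at most $C(\delta(S)/r)^\beta$ sets of diameter at most $r$ ($\delta$ = diameter). For a metric space $Y$, $\mathrm{pc}(Y)$ is the class of metric spaces $Q$ with $d_{GH}(u_iA_i,Q)\to0$ for some subsets $A_i\subset Y$ and $u_i>0$; $\mathrm{kpc}(Y)$ is the same with all $A_i$ compact. $\mathrm{tpc}(F)$ is the class of metric spaces $Q$ with $d_{GH}(u_i(A_i\cap F),Q)\to0$ for some $u_i>0$ and some sequence of cubes $A_i$, each of the form $3^{-n}v+3^{-n}[-1/2,1/2]^N$ with $n\in\mathbb{Z}$, $v\in\mathbb{Z}^N$. $F$ satisfies the asymptotic Steinhaus property for $[0,1]^N$ if for every $\epsilon>0$ and finite $S\subset[0,1]^N$ there exist finite $T\subset F$ and $\delta>0$ with $d_{GH}(T,\delta S)\le\delta\epsilon$.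 *)

theory Defs
  imports "HOL-Analysis.Analysis"
begin

definition lp_dist :: "ereal \<Rightarrow> real ^ ('n::finite) \<Rightarrow> real ^ 'n \<Rightarrow> real" where
  "lp_dist p x y =
     (if p = \<infinity> then Max (range (\<lambda>i. \<bar>x $ i - y $ i\<bar>))
      else (\<Sum>i\<in>UNIV. \<bar>x $ i - y $ i\<bar> powr real_of_ereal p) powr (1 / real_of_ereal p))"

definition lp_diam :: "ereal \<Rightarrow> (real ^ ('n::finite)) set \<Rightarrow> real" where
  "lp_diam p S = (if S = {} then 0 else Sup {lp_dist p x y | x y. x \<in> S \<and> y \<in> S})"

definition lp_bounded :: "ereal \<Rightarrow> (real ^ ('n::finite)) set \<Rightarrow> bool" where
  "lp_bounded p S \<longleftrightarrow> (\<exists>R. \<forall>x\<in>S. \<forall>y\<in>S. lp_dist p x y \<le> R)"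

definition assouad_dim :: "ereal \<Rightarrow> (real ^ ('n::finite)) set \<Rightarrow> ereal" where
  "assouad_dim p Y = Inf (ereal ` {\<beta>. \<beta> > 0 \<and> (\<exists>C>0. \<forall>S. S \<subseteq> Y \<and> lp_bounded p S \<longrightarrow>
       (\<forall>r. 0 < r \<and> r \<le> lp_diam p S \<longrightarrow>
          (\<exists>\<U>. finite \<U> \<and> S \<subseteq> \<Union>\<U> \<and> (\<forall>U\<in>\<U>. U \<subseteq> Y \<and> lp_bounded p U \<and> lp_diam p U \<le> r) \<and>
               real (card \<U>) \<le> C * (lp_diam p S / r) powr \<beta>)))})"

definition metric_on :: "'a set \<Rightarrow> ('a \<Rightarrow> 'a \<Rightarrow> real) \<Rightarrow> bool" where
  "metric_on X d \<longleftrightarrow>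
     (\<forall>x\<in>X. \<forall>y\<in>X. 0 \<le> d x y \<and> (d x y = 0 \<longleftrightarrow> x = y) \<and> d x y = d y x) \<and>
     (\<forall>x\<in>X. \<forall>y\<in>X. \<forall>z\<in>X. d x z \<le> d x y + d y z)"

definition hausdorff_dist :: "('c \<Rightarrow> 'c \<Rightarrow> real) \<Rightarrow> 'c set \<Rightarrow> 'c set \<Rightarrow> ereal" where
  "hausdorff_dist D A B = Inf {ereal r | r. r > 0 \<and>
       (\<forall>a\<in>A. \<exists>b\<in>B. D a b < r) \<and> (\<forall>b\<in>B. \<exists>a\<in>A. D a b < r)}"

text \<open>Gromov--Hausdorff distance (BBI Def. 7.3.10 in the form of Remark 7.3.12):
  infimum of Hausdorff distances over metrics on the disjoint union extending both metrics.\<close>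

definition GH_dist :: "'a set \<Rightarrow> ('a \<Rightarrow> 'a \<Rightarrow> real) \<Rightarrow> 'b set \<Rightarrow> ('b \<Rightarrow> 'b \<Rightarrow> real) \<Rightarrow> ereal" where
  "GH_dist X dX Y dY = Inf {hausdorff_dist D (Inl ` X) (Inr ` Y) | D.
       metric_on (Inl ` X \<union> Inr ` Y) D \<and>
       (\<forall>x\<in>X. \<forall>x'\<in>X. D (Inl x) (Inl x') = dX x x') \<and>
       (\<forall>y\<in>Y. \<forall>y'\<in>Y. D (Inr y) (Inr y') = dY y y')}"

definition unit_cube :: "(real ^ ('n::finite)) set" where
  "unit_cube = cbox 0 1"

definition in_pc :: "ereal \<Rightarrow> (real ^ ('n::finite)) set \<Rightarrow> bool" where
  "in_pc p F \<longleftrightarrow> (\<exists>(A :: nat \<Rightarrow> (real ^ 'n) set) (u :: nat \<Rightarrow> real).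
      (\<forall>i. A i \<subseteq> F \<and> u i > 0) \<and>
      (\<lambda>i. GH_dist (A i) (\<lambda>x y. u i * lp_dist p x y) (unit_cube :: (real ^ 'n) set) (lp_dist p)) \<longlonglongrightarrow> 0)"

definition in_kpc :: "ereal \<Rightarrow> (real ^ ('n::finite)) set \<Rightarrow> bool" where
  "in_kpc p F \<longleftrightarrow> (\<exists>(A :: nat \<Rightarrow> (real ^ 'n) set) (u :: nat \<Rightarrow> real).
      (\<forall>i. A i \<subseteq> F \<and> compact (A i) \<and> u i > 0) \<and>
      (\<lambda>i. GH_dist (A i) (\<lambda>x y. u i * lp_dist p x y) (unit_cube :: (real ^ 'n) set) (lp_dist p)) \<longlonglongrightarrow> 0)"

definition triadic_cube :: "int \<Rightarrow> int ^ ('n::finite) \<Rightarrow> (real ^ 'n) set" where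
  "triadic_cube n v = {x. \<forall>i. \<bar>x $ i - 3 powr (- real_of_int n) * real_of_int (v $ i)\<bar>
                                  \<le> 3 powr (- real_of_int n) / 2}"

definition in_tpc :: "ereal \<Rightarrow> (real ^ ('n::finite)) set \<Rightarrow> bool" where
  "in_tpc p F \<longleftrightarrow> (\<exists>(n :: nat \<Rightarrow> int) (v :: nat \<Rightarrow> int ^ 'n) (u :: nat \<Rightarrow> real).
      (\<forall>i. u i > 0) \<and>
      (\<lambda>i. GH_dist (triadic_cube (n i) (v i) \<inter> F) (\<lambda>x y. u i * lp_dist p x y)
                    (unit_cube :: (real ^ 'n) set) (lp_dist p)) \<longlonglongrightarrow> 0)"

definition asymptotic_steinhaus :: "ereal \<Rightarrow> (real ^ ('n::finite)) set \<Rightarrow> bool" where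
  "asymptotic_steinhaus p F \<longleftrightarrow> (\<forall>\<epsilon>>0. \<forall>S. finite S \<and> S \<subseteq> (unit_cube :: (real ^ 'n) set) \<longrightarrow>
      (\<exists>T \<delta>. finite T \<and> T \<subseteq> F \<and> \<delta> > 0 \<and>
          GH_dist T (lp_dist p) S (\<lambda>x y. \<delta> * lp_dist p x y) \<le> ereal (\<delta> * \<epsilon>)))"

end

(* All five conditions are equivalent to cube density: for every eps > 0 some triadic cube Q
   has each of its points within eps * side(Q) of F \<inter> Q.
   If F is not cube dense, one child of generation k of every cube misses F, so every cube meets F
   in at most 3^(kN) - 1 of its children, and dim_A F <= log_3 (3^(kN) - 1) / k < N.
   If F is cube dense, the rescaled sets F \<inter> Q, and finite nets inside them, converge to the
   unit cube in the Gromov-Hausdorff sense; this gives the weak tangent conditions and the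
   asymptotic Steinhaus property.  Conversely, weak tangents and the Steinhaus property both
   provide almost isometric copies in F of the grids of mesh 1/m, whose m^N separated points
   force dim_A F >= N = dim_A R^N. *)

theory Submission
  imports Defs
begin

section \<open>The \<open>\<ell>\<^sup>p\<close> distance\<close>

lemma convex_on_powr_nonneg:
  fixes q :: real
  assumes q: "q \<ge> 1"
  shows "convex_on {0..} (\<lambda>x. x powr q)"
proof (rule convex_on_linorderI)
  fix t x y :: real
  assume t: "0 < t" "t < 1" and xy: "x \<in> {0..}" "y \<in> {0..}" "x < y"
  show "((1 - t) *\<^sub>R x + t *\<^sub>R y) powr q \<le> (1 - t) * x powr q + t * y powr q"
  proof (cases "x = 0")
    case True
    have "t powr q \<le> t"
      using powr_mono'[of 1 q t] t q by simp
    then have "t powr q * y powr q \<le> t * y powr q"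
      by (simp add: mult_right_mono)
    then show ?thesis
      using True t xy by (simp add: powr_mult)
  next
    case False
    then show ?thesis
      using convex_onD[OF powr_convex[OF q], of t x y] t xy by simp
  qed
qed (simp add: convex_real_interval)

text \<open>Convexity applied to \<open>x + y = (A + B) (\<lambda> x/A + (1 - \<lambda>) y/B)\<close> with \<open>\<lambda> = A / (A + B)\<close>.\<close>

lemma powr_add_le_weighted:
  fixes q x y A B :: real
  assumes q: "q \<ge> 1" and xy: "x \<ge> 0" "y \<ge> 0" and AB: "A > 0" "B > 0"
  shows "(x + y) powr q \<le> (A + B) powr q * (A / (A + B) * (x / A) powr q + B / (A + B) * (y / B) powr q)"
proof -
  define t where "t = B / (A + B)"
  have t: "0 \<le> t" "t \<le> 1" "1 - t = A / (A + B)"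
    using AB unfolding t_def by (auto simp: field_simps)
  have "(A + B) * ((1 - t) * (x / A)) = x"
    using AB unfolding t(3) by simp
  moreover have "(A + B) * (t * (y / B)) = y"
    using AB unfolding t_def by simp
  ultimately have "x + y = (A + B) * ((1 - t) * (x / A) + t * (y / B))"
    by (simp add: distrib_left)
  then have "(x + y) powr q = (A + B) powr q * ((1 - t) * (x / A) + t * (y / B)) powr q"
    using AB t xy by (simp add: powr_mult)
  also have "\<dots> \<le> (A + B) powr q * ((1 - t) * (x / A) powr q + t * (y / B) powr q)"
    using convex_onD[OF convex_on_powr_nonneg[OF q], of t "x / A" "y / B"] AB t xy
    by (intro mult_left_mono) simp_all
  finally show ?thesis
    unfolding t(3) unfolding t_def .
qed

lemma sum_powr_abs_add_le:
  fixes a b :: "'i \<Rightarrow> real" and q :: real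
  assumes q: "q \<ge> 1" and SA: "0 < (\<Sum>i\<in>I. \<bar>a i\<bar> powr q)" and SB: "0 < (\<Sum>i\<in>I. \<bar>b i\<bar> powr q)"
  shows "(\<Sum>i\<in>I. \<bar>a i + b i\<bar> powr q)
     \<le> ((\<Sum>i\<in>I. \<bar>a i\<bar> powr q) powr (1/q) + (\<Sum>i\<in>I. \<bar>b i\<bar> powr q) powr (1/q)) powr q"
proof -
  define SA where "SA = (\<Sum>i\<in>I. \<bar>a i\<bar> powr q)"
  define SB where "SB = (\<Sum>i\<in>I. \<bar>b i\<bar> powr q)"
  define A where "A = SA powr (1/q)"
  define B where "B = SB powr (1/q)"
  have Aq: "A powr q = SA" and Bq: "B powr q = SB"
    unfolding A_def B_def SA_def SB_def using q SA SB by (simp_all add: powr_powr)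
  have AB: "A > 0" "B > 0"
    unfolding A_def B_def SA_def SB_def using SA SB by simp_all
  define c where "c = (A + B) powr q * (A / (A + B) / SA)"
  define d where "d = (A + B) powr q * (B / (A + B) / SB)"
  have pointwise: "\<bar>a i + b i\<bar> powr q \<le> c * \<bar>a i\<bar> powr q + d * \<bar>b i\<bar> powr q" for i
  proof -
    have "\<bar>a i + b i\<bar> powr q \<le> (\<bar>a i\<bar> + \<bar>b i\<bar>) powr q"
      using q by (intro powr_mono2) auto
    also have "\<dots> \<le> (A + B) powr q * (A / (A + B) * (\<bar>a i\<bar> / A) powr q + B / (A + B) * (\<bar>b i\<bar> / B) powr q)"
      using q AB by (intro powr_add_le_weighted) auto
    also have "\<dots> = c * \<bar>a i\<bar> powr q + d * \<bar>b i\<bar> powr q"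
      unfolding c_def d_def using AB by (simp add: powr_divide Aq Bq algebra_simps)
    finally show ?thesis .
  qed
  have "(\<Sum>i\<in>I. \<bar>a i + b i\<bar> powr q) \<le> (\<Sum>i\<in>I. c * \<bar>a i\<bar> powr q + d * \<bar>b i\<bar> powr q)"
    using pointwise by (rule sum_mono)
  also have "\<dots> = c * SA + d * SB"
    unfolding SA_def SB_def by (simp add: sum.distrib sum_distrib_left)
  also have "\<dots> = (A + B) powr q * (A / (A + B) + B / (A + B))"
    unfolding c_def d_def using SA SB by (simp add: SA_def SB_def distrib_left)
  also have "\<dots> = (A + B) powr q"
    using AB by (simp add: add_divide_distrib[symmetric])
  finally show ?thesis
    unfolding A_def B_def SA_def SB_def .
qed

lemma Minkowski_sum_powr:
  fixes a b :: "'i \<Rightarrow> real" and q :: real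
  assumes I: "finite I" and q: "q \<ge> 1"
  shows "(\<Sum>i\<in>I. \<bar>a i + b i\<bar> powr q) powr (1/q)
     \<le> (\<Sum>i\<in>I. \<bar>a i\<bar> powr q) powr (1/q) + (\<Sum>i\<in>I. \<bar>b i\<bar> powr q) powr (1/q)"
proof -
  have vanish: "c i = 0" if "(\<Sum>i\<in>I. \<bar>c i\<bar> powr q) = 0" "i \<in> I" for c :: "'i \<Rightarrow> real" and i
  proof -
    have "\<forall>i\<in>I. \<bar>c i\<bar> powr q = 0"
      using that(1) I by (simp add: sum_nonneg_eq_0_iff)
    then show ?thesis
      using that(2) by simp
  qed
  have nonneg: "0 \<le> (\<Sum>i\<in>I. \<bar>a i\<bar> powr q)" "0 \<le> (\<Sum>i\<in>I. \<bar>b i\<bar> powr q)"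
    by (simp_all add: sum_nonneg)
  show ?thesis
  proof (cases "(\<Sum>i\<in>I. \<bar>a i\<bar> powr q) = 0 \<or> (\<Sum>i\<in>I. \<bar>b i\<bar> powr q) = 0")
    case True
    then show ?thesis
    proof
      assume a0: "(\<Sum>i\<in>I. \<bar>a i\<bar> powr q) = 0"
      then have "\<forall>i\<in>I. a i = 0"
        using vanish[of a] by blast
      then have "(\<Sum>i\<in>I. \<bar>a i + b i\<bar> powr q) = (\<Sum>i\<in>I. \<bar>b i\<bar> powr q)"
        by simp
      then show ?thesis
        using a0 by simp
    next
      assume b0: "(\<Sum>i\<in>I. \<bar>b i\<bar> powr q) = 0"
      then have "\<forall>i\<in>I. b i = 0"
        using vanish[of b] by blast
      then have "(\<Sum>i\<in>I. \<bar>a i + b i\<bar> powr q) = (\<Sum>i\<in>I. \<bar>a i\<bar> powr q)"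
        by simp
      then show ?thesis
        using b0 by simp
    qed
  next
    case False
    then have pos: "0 < (\<Sum>i\<in>I. \<bar>a i\<bar> powr q)" "0 < (\<Sum>i\<in>I. \<bar>b i\<bar> powr q)"
      using nonneg by linarith+
    have "(\<Sum>i\<in>I. \<bar>a i + b i\<bar> powr q) powr (1/q)
        \<le> (((\<Sum>i\<in>I. \<bar>a i\<bar> powr q) powr (1/q) + (\<Sum>i\<in>I. \<bar>b i\<bar> powr q) powr (1/q)) powr q) powr (1/q)"
      using q sum_powr_abs_add_le[OF q pos] by (intro powr_mono2) (auto intro: sum_nonneg)
    then show ?thesis
      using q by (simp add: powr_powr)
  qed
qed

lemma real_of_ereal_ge_1: "1 \<le> p \<Longrightarrow> p \<noteq> \<infinity> \<Longrightarrow> 1 \<le> real_of_ereal p"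
  by (cases p) auto

lemma lp_dist_nonneg: "0 \<le> lp_dist p x y"
  unfolding lp_dist_def
  by (auto intro!: order.trans[OF _ Max_ge[of _ "\<bar>x $ undefined - y $ undefined\<bar>"]])

lemma lp_dist_commute: "lp_dist p x y = lp_dist p y x"
  unfolding lp_dist_def by (simp add: abs_minus_commute)

locale lp_exponent =
  fixes p :: ereal
  assumes one_le_p: "1 \<le> p"
begin

lemma abs_component_le_lp_dist: "\<bar>x $ i - y $ i\<bar> \<le> lp_dist p x y"
proof (cases "p = \<infinity>")
  case False
  define q where "q = real_of_ereal p"
  have q: "q \<ge> 1"
    using real_of_ereal_ge_1[OF one_le_p False] q_def by simp
  have "\<bar>x $ i - y $ i\<bar> = (\<bar>x $ i - y $ i\<bar> powr q) powr (1/q)"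
    using q by (simp add: powr_powr)
  also have "\<dots> \<le> (\<Sum>j\<in>UNIV. \<bar>x $ j - y $ j\<bar> powr q) powr (1/q)"
    using q by (intro powr_mono2 member_le_sum) auto
  finally show ?thesis
    using False unfolding lp_dist_def q_def by simp
qed (simp add: lp_dist_def Max_ge)

lemma lp_dist_le_card_mult:
  fixes x y :: "real ^ 'n"
  assumes a: "\<And>i. \<bar>x $ i - y $ i\<bar> \<le> a"
  shows "lp_dist p x y \<le> real CARD('n) * a"
proof -
  have N: "real CARD('n) \<ge> 1" and "a \<ge> 0"
    using a[of undefined] by simp_all
  then have card_a: "a \<le> real CARD('n) * a"
    by (simp add: mult_le_cancel_right1)
  show ?thesis
  proof (cases "p = \<infinity>")
    case True
    then show ?thesis
      using order_trans[OF a card_a] unfolding lp_dist_def by (simp add: Max_le_iff)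
  next
    case False
    define q where "q = real_of_ereal p"
    have q: "q \<ge> 1"
      using real_of_ereal_ge_1[OF one_le_p False] q_def by simp
    have "(\<Sum>j\<in>UNIV. \<bar>x $ j - y $ j\<bar> powr q) \<le> real CARD('n) * a powr q"
      using sum_mono[of UNIV "\<lambda>j. \<bar>x $ j - y $ j\<bar> powr q" "\<lambda>_. a powr q"] q a
      by (simp add: powr_mono2)
    then have "(\<Sum>j\<in>UNIV. \<bar>x $ j - y $ j\<bar> powr q) powr (1/q) \<le> (real CARD('n) * a powr q) powr (1/q)"
      using q by (intro powr_mono2) (auto intro: sum_nonneg)
    also have "\<dots> = real CARD('n) powr (1/q) * a"
      using q \<open>a \<ge> 0\<close> by (simp add: powr_mult powr_powr)
    also have "\<dots> \<le> real CARD('n) * a"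
      using powr_mono[of "1/q" 1 "real CARD('n)"] q N \<open>a \<ge> 0\<close> by (simp add: mult_right_mono)
    finally show ?thesis
      using False unfolding lp_dist_def q_def by simp
  qed
qed

lemma lp_dist_eq_0_iff: "lp_dist p x y = 0 \<longleftrightarrow> x = y"
proof
  assume "lp_dist p x y = 0"
  then show "x = y"
    using abs_component_le_lp_dist[of x _ y] by (simp add: vec_eq_iff)
qed (use lp_dist_le_card_mult[of y y 0] lp_dist_nonneg[of p y y] in simp)

lemma lp_dist_self [simp]: "lp_dist p x x = 0"
  by (simp add: lp_dist_eq_0_iff)

lemma lp_dist_affine:
  fixes x y b :: "real ^ 'n"
  shows "lp_dist p (c *\<^sub>R x + b) (c *\<^sub>R y + b) = \<bar>c\<bar> * lp_dist p x y"
proof -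
  have diff: "\<bar>(c *\<^sub>R x + b) $ i - (c *\<^sub>R y + b) $ i\<bar> = \<bar>c\<bar> * \<bar>x $ i - y $ i\<bar>" for i
    by (simp add: abs_mult[symmetric] algebra_simps)
  show ?thesis
  proof (cases "p = \<infinity>")
    case True
    have "Max ((\<lambda>t. \<bar>c\<bar> * t) ` range (\<lambda>i. \<bar>x $ i - y $ i\<bar>)) = \<bar>c\<bar> * Max (range (\<lambda>i. \<bar>x $ i - y $ i\<bar>))"
      by (rule mono_Max_commute[symmetric]) (auto simp: mono_def mult_left_mono)
    then show ?thesis
      using True unfolding lp_dist_def diff by (simp add: image_image)
  next
    case False
    define q where "q = real_of_ereal p"
    have q: "q \<ge> 1"
      using real_of_ereal_ge_1[OF one_le_p False] q_def by simp
    have "(\<Sum>j\<in>UNIV. (\<bar>c\<bar> * \<bar>x $ j - y $ j\<bar>) powr q) = \<bar>c\<bar> powr q * (\<Sum>j\<in>UNIV. \<bar>x $ j - y $ j\<bar> powr q)"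
      by (simp add: powr_mult sum_distrib_left)
    then have "(\<Sum>j\<in>UNIV. (\<bar>c\<bar> * \<bar>x $ j - y $ j\<bar>) powr q) powr (1/q)
        = \<bar>c\<bar> * (\<Sum>j\<in>UNIV. \<bar>x $ j - y $ j\<bar> powr q) powr (1/q)"
      using q by (simp add: powr_mult powr_powr sum_nonneg)
    then show ?thesis
      using False unfolding lp_dist_def diff q_def by simp
  qed
qed

lemma lp_dist_triangle: "lp_dist p x z \<le> lp_dist p x y + lp_dist p y z"
proof (cases "p = \<infinity>")
  case True
  have "\<bar>x $ i - z $ i\<bar> \<le> lp_dist p x y + lp_dist p y z" for i
    using abs_component_le_lp_dist[of x i y] abs_component_le_lp_dist[of y i z] by linarith
  then show ?thesis
    using True unfolding lp_dist_def[of p x z] by (simp add: Max_le_iff)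
next
  case False
  have "1 \<le> real_of_ereal p"
    using real_of_ereal_ge_1[OF one_le_p False] .
  then show ?thesis
    using Minkowski_sum_powr[where I=UNIV and a="\<lambda>i. x $ i - y $ i" and b="\<lambda>i. y $ i - z $ i"] False
    unfolding lp_dist_def by simp
qed

lemma metric_on_scaled_lp_dist:
  assumes "u > 0"
  shows "metric_on (X :: (real ^ 'n) set) (\<lambda>x y. u * lp_dist p x y)"
proof -
  have "u * lp_dist p x z \<le> u * lp_dist p x y + u * lp_dist p y z" for x y z
    using mult_left_mono[OF lp_dist_triangle[of x z y]] assms by (simp add: distrib_left)
  then show ?thesis
    unfolding metric_on_def using assms lp_dist_nonneg[of p] lp_dist_commute[of p]
    by (auto simp: lp_dist_eq_0_iff zero_le_mult_iff)
qed

end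


section \<open>Triadic cubes\<close>

definition cube_side :: "int \<Rightarrow> real" where
  "cube_side n = 3 powr (- real_of_int n)"

lemma cube_side_pos: "cube_side n > 0"
  unfolding cube_side_def by simp

lemma cube_side_add: "cube_side (n + int k) = cube_side n / 3 ^ k"
proof -
  have "cube_side (n + int k) = cube_side n * 3 powr (- real k)"
    unfolding cube_side_def by (simp add: powr_add[symmetric])
  also have "3 powr (- real k) = 1 / 3 ^ k"
    by (simp add: powr_minus powr_realpow divide_inverse)
  finally show ?thesis
    by simp
qed

lemma mem_triadic_cube_iff:
  "x \<in> triadic_cube n v \<longleftrightarrow> (\<forall>i. \<bar>x $ i - cube_side n * real_of_int (v $ i)\<bar> \<le> cube_side n / 2)"
  unfolding triadic_cube_def cube_side_def by simp

lemma triadic_cube_center: "(\<chi> i. cube_side n * real_of_int (v $ i)) \<in> triadic_cube n v"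
  unfolding mem_triadic_cube_iff using cube_side_pos[of n] by simp

lemma exists_triadic_cube: "\<exists>v. x \<in> triadic_cube n v"
proof -
  define s where "s = cube_side n"
  have s: "s > 0"
    unfolding s_def by (rule cube_side_pos)
  have "\<bar>x $ i - s * real_of_int (round (x $ i / s))\<bar> \<le> s / 2" for i
  proof -
    have "x $ i - s * real_of_int (round (x $ i / s)) = s * (x $ i / s - real_of_int (round (x $ i / s)))"
      using s by (simp add: right_diff_distrib)
    then have "\<bar>x $ i - s * real_of_int (round (x $ i / s))\<bar> = s * \<bar>x $ i / s - real_of_int (round (x $ i / s))\<bar>"
      using s by (simp add: abs_mult)
    also have "\<dots> \<le> s * (1/2)"
      using s of_int_round_abs_le[of "x $ i / s"] by (intro mult_left_mono) (auto simp: abs_minus_commute)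
    finally show ?thesis
      by simp
  qed
  then show ?thesis
    unfolding mem_triadic_cube_iff s_def by (intro exI[of _ "\<chi> i. round (x $ i / cube_side n)"]) simp
qed

definition half_width :: "nat \<Rightarrow> int" where
  "half_width k = (3 ^ k - 1) div 2"

lemma double_half_width_add_1: "2 * half_width k + 1 = 3 ^ k"
  unfolding half_width_def by (simp add: even_two_times_div_two)

lemma half_width_nonneg: "half_width k \<ge> 0"
  unfolding half_width_def by simp

lemma of_int_half_width: "real_of_int (half_width k) = (3 ^ k - 1) / 2"
  using arg_cong[OF double_half_width_add_1[of k], of real_of_int] by simp

text \<open>The generation-\<open>n + k\<close> cubes inside \<open>triadic_cube n v\<close> are the cubes with index
  \<open>3 ^ k *s v + w\<close> for \<open>w \<in> child_offsets k\<close>.\<close>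

definition child_offsets :: "nat \<Rightarrow> (int ^ 'n) set" where
  "child_offsets k = vec_lambda ` PiE UNIV (\<lambda>_. {- half_width k .. half_width k})"

lemma mem_child_offsets_iff: "w \<in> child_offsets k \<longleftrightarrow> (\<forall>i. \<bar>w $ i\<bar> \<le> half_width k)"
proof -
  have "\<bar>w $ i\<bar> \<le> half_width k \<longleftrightarrow> w $ i \<in> {- half_width k .. half_width k}" for i
    by (auto simp: abs_le_iff)
  then have "w \<in> child_offsets k \<longleftrightarrow> (\<lambda>i. w $ i) \<in> PiE UNIV (\<lambda>_. {- half_width k .. half_width k})"
    unfolding child_offsets_def
    by (metis (no_types, lifting) UNIV_I image_iff vec_lambda_eta vec_lambda_inverse)
  then show ?thesis
    by (simp add: PiE_iff \<open>\<And>i. \<bar>w $ i\<bar> \<le> half_width k \<longleftrightarrow> _\<close>)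
qed

lemma finite_child_offsets: "finite (child_offsets k :: (int ^ 'n::finite) set)"
  unfolding child_offsets_def by (intro finite_imageI finite_PiE) auto

lemma card_child_offsets_le: "card (child_offsets k :: (int ^ 'n::finite) set) \<le> 3 ^ (k * CARD('n))"
proof -
  have "card (child_offsets k :: (int ^ 'n) set) \<le> card (PiE (UNIV::'n set) (\<lambda>_. {- half_width k .. half_width k}))"
    unfolding child_offsets_def by (rule card_image_le) (intro finite_PiE, auto)
  also have "\<dots> = nat (2 * half_width k + 1) ^ CARD('n)"
    by (simp add: card_PiE)
  also have "\<dots> = 3 ^ (k * CARD('n))"
    unfolding double_half_width_add_1 by (simp add: nat_power_eq power_mult)
  finally show ?thesis .
qed

lemma exists_int_near_within:
  fixes t :: real
  assumes "\<bar>t\<bar> \<le> real_of_int h + 1/2" "h \<ge> 0"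
  shows "\<exists>z. \<bar>z\<bar> \<le> h \<and> \<bar>t - real_of_int z\<bar> \<le> 1/2"
proof -
  have round: "\<bar>real_of_int (round t) - t\<bar> \<le> 1/2"
    by (rule of_int_round_abs_le)
  consider "h < round t" | "round t < - h" | "\<bar>round t\<bar> \<le> h"
    by linarith
  then show ?thesis
  proof cases
    case 1
    then have "real_of_int h + 1 \<le> real_of_int (round t)"
      by (metis of_int_1 of_int_add of_int_le_iff zless_imp_add1_zle)
    then show ?thesis
      using assms round by (intro exI[of _ h]) (auto simp: abs_le_iff)
  next
    case 2
    then have "real_of_int (round t) + 1 \<le> - real_of_int h"
      by (metis of_int_1 of_int_add of_int_le_iff of_int_minus zless_imp_add1_zle)
    then show ?thesis
      using assms round by (intro exI[of _ "- h"]) (auto simp: abs_le_iff)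
  next
    case 3
    then show ?thesis
      using round by (intro exI[of _ "round t"]) (simp add: abs_minus_commute)
  qed
qed

lemma mem_triadic_cube_offset:
  fixes x :: "real ^ 'n" and u :: "int ^ 'n"
  assumes x: "\<And>i. \<bar>x $ i - cube_side m * real_of_int (u $ i)\<bar> \<le> cube_side m * 3 ^ k / 2"
  shows "\<exists>w\<in>child_offsets k. x \<in> triadic_cube m (u + w)"
proof -
  define s where "s = cube_side m"
  have s: "s > 0"
    unfolding s_def by (rule cube_side_pos)
  define t where "t i = (x $ i - s * real_of_int (u $ i)) / s" for i
  have "\<bar>t i\<bar> \<le> 3 ^ k / 2" for i
    using x[of i] s unfolding t_def s_def[symmetric]
    by (simp add: abs_divide divide_le_eq mult.commute)
  then have "\<bar>t i\<bar> \<le> real_of_int (half_width k) + 1/2" for i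
    unfolding of_int_half_width by (simp add: diff_divide_distrib)
  then have "\<forall>i. \<exists>z. \<bar>z\<bar> \<le> half_width k \<and> \<bar>t i - real_of_int z\<bar> \<le> 1/2"
    using exists_int_near_within half_width_nonneg by blast
  then obtain w where w: "\<And>i. \<bar>w i\<bar> \<le> half_width k" "\<And>i. \<bar>t i - real_of_int (w i)\<bar> \<le> 1/2"
    by metis
  have "\<bar>x $ i - s * real_of_int (u $ i + w i)\<bar> \<le> s / 2" for i
  proof -
    have "x $ i - s * real_of_int (u $ i + w i) = s * (t i - real_of_int (w i))"
      using s unfolding t_def by (simp add: field_simps)
    then show ?thesis
      using w(2)[of i] s by (simp add: abs_mult)
  qed
  then have "x \<in> triadic_cube m (u + (\<chi> i. w i))"
    unfolding mem_triadic_cube_iff s_def by simp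
  moreover have "(\<chi> i. w i) \<in> child_offsets k"
    using w(1) by (simp add: mem_child_offsets_iff)
  ultimately show ?thesis
    by blast
qed

lemma triadic_cube_subset_children:
  assumes "x \<in> triadic_cube n v"
  shows "\<exists>w\<in>child_offsets k. x \<in> triadic_cube (n + int k) (3 ^ k *s v + w)"
  using assms
  by (intro mem_triadic_cube_offset) (simp add: mem_triadic_cube_iff cube_side_add)

lemma triadic_child_subset:
  assumes w: "w \<in> child_offsets k"
  shows "triadic_cube (n + int k) (3 ^ k *s v + w) \<subseteq> triadic_cube n v"
proof
  fix x
  assume x: "x \<in> triadic_cube (n + int k) (3 ^ k *s v + w)"
  define s where "s = cube_side n / 3 ^ k"
  have s: "s > 0"
    unfolding s_def using cube_side_pos[of n] by simp
  have side: "cube_side n = s * 3 ^ k"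
    unfolding s_def by simp
  show "x \<in> triadic_cube n v"
    unfolding mem_triadic_cube_iff
  proof
    fix i
    have near_child: "\<bar>x $ i - s * (3 ^ k * real_of_int (v $ i) + real_of_int (w $ i))\<bar> \<le> s / 2"
      using x unfolding mem_triadic_cube_iff cube_side_add s_def[symmetric] by simp
    have "real_of_int \<bar>w $ i\<bar> \<le> real_of_int (half_width k)"
      using w unfolding mem_child_offsets_iff by (metis of_int_le_iff)
    then have "\<bar>s * real_of_int (w $ i)\<bar> \<le> s * ((3 ^ k - 1) / 2)"
      using s unfolding of_int_half_width by (simp add: abs_mult)
    moreover have "x $ i - cube_side n * real_of_int (v $ i)
        = (x $ i - s * (3 ^ k * real_of_int (v $ i) + real_of_int (w $ i))) + s * real_of_int (w $ i)"
      unfolding side by (simp add: algebra_simps)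
    ultimately have "\<bar>x $ i - cube_side n * real_of_int (v $ i)\<bar> \<le> s / 2 + s * ((3 ^ k - 1) / 2)"
      using near_child by linarith
    also have "\<dots> = cube_side n / 2"
      unfolding side by (simp add: field_simps)
    finally show "\<bar>x $ i - cube_side n * real_of_int (v $ i)\<bar> \<le> cube_side n / 2" .
  qed
qed

definition cube_param :: "int \<Rightarrow> int ^ 'n \<Rightarrow> real ^ 'n \<Rightarrow> real ^ 'n" where
  "cube_param n v y = cube_side n *\<^sub>R y + (\<chi> i. cube_side n * (real_of_int (v $ i) - 1/2))"

lemma cube_param_image: "cube_param n v ` unit_cube = triadic_cube n v"
proof -
  define s where "s = cube_side n"
  have s: "s > 0"
    unfolding s_def by (rule cube_side_pos)
  have coord: "cube_param n v y $ i - s * real_of_int (v $ i) = s * (y $ i - 1/2)" for y i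
    unfolding cube_param_def s_def by (simp add: algebra_simps)
  have mem: "y \<in> unit_cube \<longleftrightarrow> cube_param n v y \<in> triadic_cube n v" for y
  proof -
    have "\<bar>s * (y $ i - 1/2)\<bar> \<le> s / 2 \<longleftrightarrow> 0 \<le> y $ i \<and> y $ i \<le> 1" for i
      using s by (auto simp: abs_mult abs_le_iff field_simps zero_le_mult_iff)
    then show ?thesis
      unfolding mem_triadic_cube_iff s_def[symmetric] coord unit_cube_def mem_box_cart by simp
  qed
  have inverse: "x = cube_param n v ((1 / s) *\<^sub>R (x - (\<chi> i. s * (real_of_int (v $ i) - 1/2))))" for x
    using s unfolding cube_param_def s_def[symmetric] by (simp add: vec_eq_iff)
  show ?thesis
  proof
    show "triadic_cube n v \<subseteq> cube_param n v ` unit_cube"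
    proof
      fix x
      assume x: "x \<in> triadic_cube n v"
      define y where "y = (1 / s) *\<^sub>R (x - (\<chi> i. s * (real_of_int (v $ i) - 1/2)))"
      have x_eq: "x = cube_param n v y"
        unfolding y_def by (rule inverse)
      then have "y \<in> unit_cube"
        using mem[of y] x by simp
      then show "x \<in> cube_param n v ` unit_cube"
        using x_eq by (rule rev_image_eqI)
    qed
    show "cube_param n v ` unit_cube \<subseteq> triadic_cube n v"
      using mem by (intro image_subsetI) simp
  qed
qed

lemma cube_param_mem: "y \<in> unit_cube \<Longrightarrow> cube_param n v y \<in> triadic_cube n v"
  using cube_param_image by blast

context lp_exponent
begin

lemma lp_dist_cube_param: "lp_dist p (cube_param n v y) (cube_param n v y') = cube_side n * lp_dist p y y'"
  unfolding cube_param_def lp_dist_affine using cube_side_pos[of n] by simp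

lemma lp_dist_le_in_triadic_cube:
  fixes x y :: "real ^ 'n"
  assumes "x \<in> triadic_cube n v" "y \<in> triadic_cube n v"
  shows "lp_dist p x y \<le> real CARD('n) * cube_side n"
proof (rule lp_dist_le_card_mult)
  fix i
  have "\<bar>x $ i - cube_side n * real_of_int (v $ i)\<bar> \<le> cube_side n / 2"
    "\<bar>y $ i - cube_side n * real_of_int (v $ i)\<bar> \<le> cube_side n / 2"
    using assms unfolding mem_triadic_cube_iff by blast+
  then show "\<bar>x $ i - y $ i\<bar> \<le> cube_side n"
    unfolding abs_le_iff by linarith
qed

lemma lp_bounded_triadic_cube_inter:
  fixes Y :: "(real ^ 'n) set"
  shows "lp_bounded p (triadic_cube n v \<inter> Y)"
  unfolding lp_bounded_def
proof (intro exI ballI)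
  fix x y
  assume "x \<in> triadic_cube n v \<inter> Y" "y \<in> triadic_cube n v \<inter> Y"
  then show "lp_dist p x y \<le> real CARD('n) * cube_side n"
    using lp_dist_le_in_triadic_cube by blast
qed

end


section \<open>Gromov--Hausdorff distance\<close>

lemma hausdorff_dist_nonneg: "0 \<le> hausdorff_dist D A B"
  unfolding hausdorff_dist_def by (rule Inf_greatest) auto

lemma GH_dist_nonneg: "0 \<le> GH_dist X dX Y dY"
  unfolding GH_dist_def by (rule Inf_greatest) (auto intro: hausdorff_dist_nonneg)

text \<open>Two subsets of a common metric space, glued along \<open>\<eta> > 0\<close> so that the two copies stay
  disjoint even where the subsets overlap.\<close>

lemma metric_on_glued_sum:
  fixes \<alpha> :: "'a \<Rightarrow> 'c" and \<beta> :: "'b \<Rightarrow> 'c"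
  assumes Z: "metric_on Z dZ" and "\<alpha> ` X \<subseteq> Z" "\<beta> ` Y \<subseteq> Z"
    and "inj_on \<alpha> X" "inj_on \<beta> Y" and "\<eta> > 0"
  shows "metric_on (Inl ` X \<union> Inr ` Y)
           (\<lambda>a b. dZ (case_sum \<alpha> \<beta> a) (case_sum \<alpha> \<beta> b) + (if isl a = isl b then 0 else \<eta>))"
  unfolding metric_on_def
proof (intro conjI ballI)
  let ?\<gamma> = "case_sum \<alpha> \<beta>" and ?U = "Inl ` X \<union> Inr ` Y"
  fix a b c
  assume abc: "a \<in> ?U" "b \<in> ?U" "c \<in> ?U"
  then have Zabc: "?\<gamma> a \<in> Z" "?\<gamma> b \<in> Z" "?\<gamma> c \<in> Z"
    using assms(2,3) by auto
  then have dZ: "0 \<le> dZ (?\<gamma> a) (?\<gamma> b)" "dZ (?\<gamma> a) (?\<gamma> b) = dZ (?\<gamma> b) (?\<gamma> a)"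
    "dZ (?\<gamma> a) (?\<gamma> b) = 0 \<longleftrightarrow> ?\<gamma> a = ?\<gamma> b"
    "dZ (?\<gamma> a) (?\<gamma> c) \<le> dZ (?\<gamma> a) (?\<gamma> b) + dZ (?\<gamma> b) (?\<gamma> c)"
    using Z unfolding metric_on_def by blast+
  have "?\<gamma> a = ?\<gamma> b \<Longrightarrow> isl a = isl b \<Longrightarrow> a = b"
    using abc assms(4,5) by (auto dest: inj_onD)
  then show "0 \<le> dZ (?\<gamma> a) (?\<gamma> b) + (if isl a = isl b then 0 else \<eta>)"
    and "(dZ (?\<gamma> a) (?\<gamma> b) + (if isl a = isl b then 0 else \<eta>) = 0) = (a = b)"
    and "dZ (?\<gamma> a) (?\<gamma> b) + (if isl a = isl b then 0 else \<eta>)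
       = dZ (?\<gamma> b) (?\<gamma> a) + (if isl b = isl a then 0 else \<eta>)"
    using dZ \<open>\<eta> > 0\<close> by auto
  show "dZ (?\<gamma> a) (?\<gamma> c) + (if isl a = isl c then 0 else \<eta>)
      \<le> dZ (?\<gamma> a) (?\<gamma> b) + (if isl a = isl b then 0 else \<eta>)
        + (dZ (?\<gamma> b) (?\<gamma> c) + (if isl b = isl c then 0 else \<eta>))"
    using dZ(4) \<open>\<eta> > 0\<close> by auto
qed

lemma GH_dist_le_via_embeddings:
  fixes \<alpha> :: "'a \<Rightarrow> 'c" and \<beta> :: "'b \<Rightarrow> 'c"
  assumes Z: "metric_on Z dZ" and "\<alpha> ` X \<subseteq> Z" "\<beta> ` Y \<subseteq> Z"
    and "inj_on \<alpha> X" "inj_on \<beta> Y"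
    and dX: "\<And>x x'. x \<in> X \<Longrightarrow> x' \<in> X \<Longrightarrow> dX x x' = dZ (\<alpha> x) (\<alpha> x')"
    and dY: "\<And>y y'. y \<in> Y \<Longrightarrow> y' \<in> Y \<Longrightarrow> dY y y' = dZ (\<beta> y) (\<beta> y')"
    and e: "e \<ge> 0"
    and close_X: "\<And>x. x \<in> X \<Longrightarrow> \<exists>y\<in>Y. dZ (\<alpha> x) (\<beta> y) \<le> e"
    and close_Y: "\<And>y. y \<in> Y \<Longrightarrow> \<exists>x\<in>X. dZ (\<alpha> x) (\<beta> y) \<le> e"
  shows "GH_dist X dX Y dY \<le> ereal e"
proof (rule ereal_le_epsilon2)
  fix \<eta> :: real
  assume \<eta>: "0 < \<eta>"
  define D where "D a b = dZ (case_sum \<alpha> \<beta> a) (case_sum \<alpha> \<beta> b) + (if isl a = isl b then 0 else \<eta> / 2)"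
    for a b
  have "metric_on (Inl ` X \<union> Inr ` Y) D"
    unfolding D_def using metric_on_glued_sum[OF assms(1-5)] \<eta> by simp
  moreover have "\<forall>x\<in>X. \<forall>x'\<in>X. D (Inl x) (Inl x') = dX x x'"
    and "\<forall>y\<in>Y. \<forall>y'\<in>Y. D (Inr y) (Inr y') = dY y y'"
    unfolding D_def using dX dY by simp_all
  ultimately have "GH_dist X dX Y dY \<le> hausdorff_dist D (Inl ` X) (Inr ` Y)"
    unfolding GH_dist_def by (intro Inf_lower) blast
  also have "\<dots> \<le> ereal (e + \<eta>)"
    unfolding hausdorff_dist_def
  proof (rule Inf_lower, intro CollectI exI conjI)
    show "\<forall>a\<in>Inl ` X. \<exists>b\<in>Inr ` Y. D a b < e + \<eta>"
    proof
      fix a :: "'a + 'b"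
      assume "a \<in> Inl ` X"
      then obtain x where x: "x \<in> X" "a = Inl x"
        by auto
      then obtain y where "y \<in> Y" "dZ (\<alpha> x) (\<beta> y) \<le> e"
        using close_X by blast
      then show "\<exists>b\<in>Inr ` Y. D a b < e + \<eta>"
        using x \<eta> unfolding D_def by (intro bexI[of _ "Inr y"]) auto
    qed
    show "\<forall>b\<in>Inr ` Y. \<exists>a\<in>Inl ` X. D a b < e + \<eta>"
    proof
      fix b :: "'a + 'b"
      assume "b \<in> Inr ` Y"
      then obtain y where y: "y \<in> Y" "b = Inr y"
        by auto
      then obtain x where "x \<in> X" "dZ (\<alpha> x) (\<beta> y) \<le> e"
        using close_Y by blast
      then show "\<exists>a\<in>Inl ` X. D a b < e + \<eta>"
        using y \<eta> unfolding D_def by (intro bexI[of _ "Inl x"]) auto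
    qed
  qed (use e \<eta> in simp_all)
  finally show "GH_dist X dX Y dY \<le> ereal e + ereal \<eta>"
    by simp
qed

lemma GH_dist_less_imp_distortion:
  fixes X :: "'a set" and Y :: "'b set"
  assumes "GH_dist X dX Y dY < ereal e"
  shows "\<exists>f. \<forall>y\<in>Y. f y \<in> X \<and> (\<forall>y'\<in>Y. \<bar>dX (f y) (f y') - dY y y'\<bar> < 2 * e)"
proof -
  obtain h where "h \<in> {hausdorff_dist D (Inl ` X) (Inr ` Y) | D.
       metric_on (Inl ` X \<union> Inr ` Y) D \<and>
       (\<forall>x\<in>X. \<forall>x'\<in>X. D (Inl x) (Inl x') = dX x x') \<and>
       (\<forall>y\<in>Y. \<forall>y'\<in>Y. D (Inr y) (Inr y') = dY y y')}" "h < ereal e"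
    using assms unfolding GH_dist_def Inf_less_iff by blast
  then obtain D where D: "metric_on (Inl ` X \<union> Inr ` Y) D"
    and dX: "\<forall>x\<in>X. \<forall>x'\<in>X. D (Inl x) (Inl x') = dX x x'"
    and dY: "\<forall>y\<in>Y. \<forall>y'\<in>Y. D (Inr y) (Inr y') = dY y y'"
    and "hausdorff_dist D (Inl ` X) (Inr ` Y) < ereal e"
    by blast
  then obtain r where r: "\<forall>b\<in>Inr ` Y. \<exists>a\<in>Inl ` X. D a b < r" "ereal r < ereal e"
    unfolding hausdorff_dist_def Inf_less_iff by blast
  have "\<forall>y\<in>Y. \<exists>x. x \<in> X \<and> D (Inl x) (Inr y) < r"
    using r(1) by fastforce
  then obtain f where f: "\<forall>y\<in>Y. f y \<in> X \<and> D (Inl (f y)) (Inr y) < r"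
    by metis
  show ?thesis
  proof (intro exI ballI conjI)
    fix y y'
    assume y: "y \<in> Y" and y': "y' \<in> Y"
    then have fy: "f y \<in> X" "f y' \<in> X"
      using f by auto
    let ?U = "Inl ` X \<union> Inr ` Y"
    have tri: "\<And>a b c. a \<in> ?U \<Longrightarrow> b \<in> ?U \<Longrightarrow> c \<in> ?U \<Longrightarrow> D a c \<le> D a b + D b c"
      and sym: "\<And>a b. a \<in> ?U \<Longrightarrow> b \<in> ?U \<Longrightarrow> D a b = D b a"
      using D unfolding metric_on_def by blast+
    have "D (Inl (f y)) (Inl (f y')) \<le> D (Inl (f y)) (Inr y) + D (Inr y) (Inr y') + D (Inr y') (Inl (f y'))"
      and "D (Inr y) (Inr y') \<le> D (Inr y) (Inl (f y)) + D (Inl (f y)) (Inl (f y')) + D (Inl (f y')) (Inr y')"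
      using tri[of "Inl (f y)" "Inr y" "Inl (f y')"] tri[of "Inr y" "Inr y'" "Inl (f y')"]
        tri[of "Inr y" "Inl (f y)" "Inr y'"] tri[of "Inl (f y)" "Inl (f y')" "Inr y'"] fy y y'
      by fastforce+
    moreover have "D (Inr y) (Inl (f y)) = D (Inl (f y)) (Inr y)" "D (Inr y') (Inl (f y')) = D (Inl (f y')) (Inr y')"
      using sym fy y y' by blast+
    moreover have "D (Inl (f y)) (Inr y) < r" "D (Inl (f y')) (Inr y') < r"
      using f y y' by auto
    ultimately show "\<bar>dX (f y) (f y') - dY y y'\<bar> < 2 * e"
      using dX dY fy y y' r(2) by (simp add: abs_less_iff)
    show "f y \<in> X"
      using f y by blast
  qed
qed


section \<open>Assouad dimension via triadic covers\<close>

definition lp_small_cover ::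
    "ereal \<Rightarrow> (real ^ 'n) set \<Rightarrow> real \<Rightarrow> (real ^ 'n) set \<Rightarrow> (real ^ 'n) set set \<Rightarrow> bool" where
  "lp_small_cover p Y r S \<U> \<longleftrightarrow>
     finite \<U> \<and> S \<subseteq> \<Union>\<U> \<and> (\<forall>U\<in>\<U>. U \<subseteq> Y \<and> lp_bounded p U \<and> lp_diam p U \<le> r)"

definition assouad_bound :: "ereal \<Rightarrow> (real ^ 'n) set \<Rightarrow> real \<Rightarrow> real \<Rightarrow> bool" where
  "assouad_bound p Y C \<beta> \<longleftrightarrow> (\<forall>S. S \<subseteq> Y \<and> lp_bounded p S \<longrightarrow>
     (\<forall>r. 0 < r \<and> r \<le> lp_diam p S \<longrightarrow>
        (\<exists>\<U>. lp_small_cover p Y r S \<U> \<and> real (card \<U>) \<le> C * (lp_diam p S / r) powr \<beta>)))"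

definition assouad_exponents :: "ereal \<Rightarrow> (real ^ 'n) set \<Rightarrow> real set" where
  "assouad_exponents p Y = {\<beta>. \<beta> > 0 \<and> (\<exists>C>0. assouad_bound p Y C \<beta>)}"

lemma assouad_dim_eq_Inf_exponents: "assouad_dim p Y = Inf (ereal ` assouad_exponents p Y)"
  unfolding assouad_dim_def assouad_exponents_def assouad_bound_def lp_small_cover_def
  by (simp add: conj_assoc)

lemma lp_diam_le:
  assumes "S \<noteq> {}" "\<And>x y. x \<in> S \<Longrightarrow> y \<in> S \<Longrightarrow> lp_dist p x y \<le> R"
  shows "lp_diam p S \<le> R"
proof -
  have "{lp_dist p x y | x y. x \<in> S \<and> y \<in> S} \<noteq> {}"
    using assms(1) by blast
  then have "Sup {lp_dist p x y | x y. x \<in> S \<and> y \<in> S} \<le> R"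
    by (rule cSup_least) (auto simp: assms(2))
  then show ?thesis
    unfolding lp_diam_def using assms(1) by simp
qed

lemma lp_dist_le_lp_diam:
  assumes "lp_bounded p S" "x \<in> S" "y \<in> S"
  shows "lp_dist p x y \<le> lp_diam p S"
proof -
  obtain R where "\<forall>x\<in>S. \<forall>y\<in>S. lp_dist p x y \<le> R"
    using assms(1) unfolding lp_bounded_def by blast
  then have "bdd_above {lp_dist p x y | x y. x \<in> S \<and> y \<in> S}"
    by (auto intro!: bdd_aboveI)
  then show ?thesis
    unfolding lp_diam_def using assms(2,3) by (auto intro!: cSup_upper)
qed

definition triadic_cover_bound :: "(real ^ 'n) set \<Rightarrow> nat \<Rightarrow> nat \<Rightarrow> bool" where
  "triadic_cover_bound Y k K \<longleftrightarrow> (\<forall>n v. \<exists>W. finite W \<and> card W \<le> K \<and>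
     triadic_cube n v \<inter> Y \<subseteq> (\<Union>w\<in>W. triadic_cube (n + int k) w))"

lemma card_image_child_offsets_le:
  fixes f :: "int ^ 'n \<Rightarrow> 'a"
  shows "card (f ` child_offsets k) \<le> 3 ^ (k * CARD('n))"
  by (rule order_trans[OF card_image_le[OF finite_child_offsets] card_child_offsets_le])

lemma triadic_cover_bound_children: "triadic_cover_bound Y 1 (3 ^ CARD('n))"
  for Y :: "(real ^ 'n) set"
  unfolding triadic_cover_bound_def
proof (intro allI exI conjI)
  fix n :: int and v :: "int ^ 'n"
  show "finite ((\<lambda>w. 3 ^ 1 *s v + w) ` child_offsets 1)"
    by (intro finite_imageI finite_child_offsets)
  show "card ((\<lambda>w. 3 ^ 1 *s v + w) ` child_offsets 1) \<le> 3 ^ CARD('n)"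
    using card_image_child_offsets_le[of "\<lambda>w. 3 ^ 1 *s v + w" 1] by simp
  show "triadic_cube n v \<inter> Y \<subseteq> (\<Union>w\<in>(\<lambda>w. 3 ^ 1 *s v + w) ` child_offsets 1. triadic_cube (n + int 1) w)"
    using triadic_cube_subset_children[of _ n v 1] by blast
qed

lemma triadic_cover_bound_trans:
  assumes H: "triadic_cover_bound Y k K" and H': "triadic_cover_bound Y l L"
  shows "triadic_cover_bound Y (l + k) (L * K)"
  unfolding triadic_cover_bound_def
proof (intro allI)
  fix n v
  obtain W where W: "finite W" "card W \<le> L"
    "triadic_cube n v \<inter> Y \<subseteq> (\<Union>w\<in>W. triadic_cube (n + int l) w)"
    using H' unfolding triadic_cover_bound_def by blast
  obtain g where g: "\<And>w. finite (g w) \<and> card (g w) \<le> K \<and>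
      triadic_cube (n + int l) w \<inter> Y \<subseteq> (\<Union>w'\<in>g w. triadic_cube (n + int l + int k) w')"
    using H unfolding triadic_cover_bound_def by metis
  have "card (\<Union>w\<in>W. g w) \<le> (\<Sum>w\<in>W. card (g w))"
    using W(1) by (rule card_UN_le)
  also have "\<dots> \<le> card W * K"
    using sum_mono[of W "\<lambda>w. card (g w)" "\<lambda>_. K"] g by simp
  also have "\<dots> \<le> L * K"
    using W(2) by simp
  finally have "card (\<Union>w\<in>W. g w) \<le> L * K" .
  moreover have "triadic_cube n v \<inter> Y \<subseteq> (\<Union>w'\<in>(\<Union>w\<in>W. g w). triadic_cube (n + int (l + k)) w')"
  proof
    fix x
    assume x: "x \<in> triadic_cube n v \<inter> Y"
    then obtain w where w: "w \<in> W" "x \<in> triadic_cube (n + int l) w"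
      using W(3) by blast
    then obtain w' where w': "w' \<in> g w" "x \<in> triadic_cube (n + int l + int k) w'"
      using g[of w] x by blast
    have level: "n + int l + int k = n + int (l + k)"
      by simp
    have "x \<in> triadic_cube (n + int (l + k)) w'"
      using w'(2) unfolding level .
    then show "x \<in> (\<Union>w'\<in>(\<Union>w\<in>W. g w). triadic_cube (n + int (l + k)) w')"
      using w(1) w'(1) by blast
  qed
  moreover have "finite (\<Union>w\<in>W. g w)"
    using W(1) g by auto
  ultimately show "\<exists>W. finite W \<and> card W \<le> L * K \<and>
      triadic_cube n v \<inter> Y \<subseteq> (\<Union>w\<in>W. triadic_cube (n + int (l + k)) w)"
    by blast
qed

lemma triadic_cover_bound_iterate:
  assumes "triadic_cover_bound Y k K"
  shows "triadic_cover_bound Y (j * k) (K ^ j)"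
proof (induction j)
  case 0
  show ?case
    unfolding triadic_cover_bound_def
  proof (intro allI)
    fix n v
    show "\<exists>W. finite W \<and> card W \<le> K ^ 0 \<and> triadic_cube n v \<inter> Y \<subseteq> (\<Union>w\<in>W. triadic_cube (n + int (0 * k)) w)"
      by (intro exI[of _ "{v}"]) auto
  qed
next
  case (Suc j)
  then have "triadic_cover_bound Y (j * k + k) (K ^ j * K)"
    using assms by (rule triadic_cover_bound_trans[rotated])
  then show ?case
    by (simp add: add.commute mult.commute)
qed

lemma exists_power_between:
  fixes a b :: real
  assumes "1 \<le> a" "1 < b" "k \<ge> 1"
  shows "\<exists>j. a \<le> b ^ (j * k) \<and> b ^ (j * k) \<le> b ^ k * a"
proof -
  obtain j where "a < b ^ j"
    using real_arch_pow[OF assms(2)] by blast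
  moreover have "b ^ j \<le> b ^ (j * k)"
    using assms by (intro power_increasing) auto
  ultimately have ex: "\<exists>j. a \<le> b ^ (j * k)"
    by (meson less_le_trans less_imp_le)
  define j where "j = (LEAST j. a \<le> b ^ (j * k))"
  have "a \<le> b ^ (j * k)"
    unfolding j_def using ex by (rule LeastI_ex)
  moreover have "b ^ (j * k) \<le> b ^ k * a"
  proof (cases j)
    case 0
    have "1 * 1 \<le> b ^ k * a"
      using assms one_le_power[of b k] by (intro mult_mono) auto
    then show ?thesis
      using 0 by simp
  next
    case (Suc j')
    then have "b ^ (j' * k) < a"
      using not_less_Least[of j' "\<lambda>j. a \<le> b ^ (j * k)"] unfolding j_def by simp
    then show ?thesis
      using Suc assms by (simp add: power_add)
  qed
  ultimately show ?thesis
    by blast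
qed

context lp_exponent
begin

lemma lp_diam_triadic_cube_inter_le:
  fixes Y :: "(real ^ 'n) set"
  assumes "0 \<le> r" "real CARD('n) * cube_side n \<le> r"
  shows "lp_diam p (triadic_cube n v \<inter> Y) \<le> r"
proof (cases "triadic_cube n v \<inter> Y = {}")
  case False
  then show ?thesis
  proof (rule lp_diam_le)
    fix x y
    assume "x \<in> triadic_cube n v \<inter> Y" "y \<in> triadic_cube n v \<inter> Y"
    then have "lp_dist p x y \<le> real CARD('n) * cube_side n"
      by (intro lp_dist_le_in_triadic_cube) auto
    then show "lp_dist p x y \<le> r"
      using assms(2) by linarith
  qed
qed (simp add: lp_diam_def assms(1))

text \<open>The offsets \<open>child_offsets 1\<close> index the \<open>3\<^sup>N\<close> cubes of generation \<open>n\<close> surrounding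
  \<open>triadic_cube n v\<close>.\<close>

lemma bounded_subset_triadic_block:
  assumes S: "lp_bounded p S" and d: "0 < lp_diam p S"
  obtains n v where "lp_diam p S \<le> cube_side n" "cube_side n \<le> 3 * lp_diam p S"
    "\<forall>y\<in>S. \<exists>w\<in>child_offsets 1. y \<in> triadic_cube n (v + w)"
proof -
  define d where "d = lp_diam p S"
  obtain x0 where x0: "x0 \<in> S"
    using d unfolding lp_diam_def by (auto split: if_splits)
  define n :: int where "n = - \<lceil>log 3 d\<rceil>"
  have side: "cube_side n = 3 powr real_of_int \<lceil>log 3 d\<rceil>"
    unfolding cube_side_def n_def by simp
  have "d = 3 powr (log 3 d)"
    using d unfolding d_def by simp
  also have "\<dots> \<le> cube_side n"
    unfolding side by (intro powr_mono) auto
  finally have d_le: "d \<le> cube_side n" .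
  have "cube_side n \<le> 3 powr (log 3 d + 1)"
    unfolding side using ceiling_correct[of "log 3 d"] by (intro powr_mono) auto
  also have "\<dots> = 3 * d"
    using d unfolding d_def by (simp add: powr_add)
  finally have le_3d: "cube_side n \<le> 3 * d" .
  obtain v where v: "x0 \<in> triadic_cube n v"
    using exists_triadic_cube by blast
  have "\<exists>w\<in>child_offsets 1. y \<in> triadic_cube n (v + w)" if y: "y \<in> S" for y
  proof (rule mem_triadic_cube_offset)
    fix i
    have "\<bar>y $ i - x0 $ i\<bar> \<le> cube_side n"
      using abs_component_le_lp_dist[of y i x0] lp_dist_le_lp_diam[OF S y x0] d_le
      unfolding d_def by linarith
    moreover have "\<bar>x0 $ i - cube_side n * real_of_int (v $ i)\<bar> \<le> cube_side n / 2"
      using v unfolding mem_triadic_cube_iff by blast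
    ultimately have "\<bar>y $ i - cube_side n * real_of_int (v $ i)\<bar> \<le> 3 / 2 * cube_side n"
      unfolding abs_le_iff by linarith
    then show "\<bar>y $ i - cube_side n * real_of_int (v $ i)\<bar> \<le> cube_side n * 3 ^ 1 / 2"
      by simp
  qed
  then show ?thesis
    using that d_le le_3d unfolding d_def by blast
qed

lemma small_cover_of_triadic_block:
  fixes Y :: "(real ^ 'n) set"
  assumes H: "triadic_cover_bound Y m M" and SY: "S \<subseteq> Y"
    and block: "\<forall>y\<in>S. \<exists>w\<in>child_offsets 1. y \<in> triadic_cube n (v + w)"
    and r: "0 \<le> r" "real CARD('n) * cube_side (n + int m) \<le> r"
  shows "\<exists>\<U>. lp_small_cover p Y r S \<U> \<and> card \<U> \<le> 3 ^ CARD('n) * M"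
proof -
  have "\<forall>w. \<exists>W. finite W \<and> card W \<le> M \<and>
      triadic_cube n (v + w) \<inter> Y \<subseteq> (\<Union>w'\<in>W. triadic_cube (n + int m) w')"
    using H unfolding triadic_cover_bound_def by blast
  then obtain Wf where Wf: "\<And>w. finite (Wf w) \<and> card (Wf w) \<le> M \<and>
      triadic_cube n (v + w) \<inter> Y \<subseteq> (\<Union>w'\<in>Wf w. triadic_cube (n + int m) w')"
    by metis
  define W where "W = (\<Union>w\<in>child_offsets 1. Wf w)"
  define \<U> where "\<U> = (\<lambda>w. triadic_cube (n + int m) w \<inter> Y) ` W"
  have "finite W"
    unfolding W_def using finite_child_offsets Wf by blast
  have "card \<U> \<le> card W"
    unfolding \<U>_def using \<open>finite W\<close> by (rule card_image_le)
  also have "\<dots> \<le> (\<Sum>w\<in>(child_offsets 1 :: (int ^ 'n) set). card (Wf w))"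
    unfolding W_def by (rule card_UN_le[OF finite_child_offsets])
  also have "\<dots> \<le> card (child_offsets 1 :: (int ^ 'n) set) * M"
    using sum_mono[of "child_offsets 1" "\<lambda>w. card (Wf w)" "\<lambda>_. M"] Wf by simp
  also have "\<dots> \<le> 3 ^ CARD('n) * M"
    using card_child_offsets_le[of 1, where 'n='n] by simp
  finally have "card \<U> \<le> 3 ^ CARD('n) * M" .
  moreover have "S \<subseteq> \<Union>\<U>"
  proof
    fix y
    assume y: "y \<in> S"
    then obtain w where w: "w \<in> child_offsets 1" "y \<in> triadic_cube n (v + w)"
      using block by blast
    then obtain w' where "w' \<in> Wf w" "y \<in> triadic_cube (n + int m) w'"
      using Wf[of w] y SY by blast
    then show "y \<in> \<Union>\<U>"
      unfolding \<U>_def W_def using w(1) y SY by blast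
  qed
  moreover have "U \<subseteq> Y \<and> lp_bounded p U \<and> lp_diam p U \<le> r" if "U \<in> \<U>" for U
    using that lp_bounded_triadic_cube_inter lp_diam_triadic_cube_inter_le[OF r]
    unfolding \<U>_def by auto
  moreover have "finite \<U>"
    unfolding \<U>_def using \<open>finite W\<close> by simp
  ultimately show ?thesis
    unfolding lp_small_cover_def by blast
qed

text \<open>If every triadic cube meets \<open>Y\<close> in a set covered by \<open>K\<close> cubes \<open>k\<close> generations finer,
  then iterating \<open>j\<close> times reaches scale \<open>3\<^sup>-\<^sup>j\<^sup>k\<close> with \<open>K\<^sup>j = (3\<^sup>j\<^sup>k)\<^sup>s\<close> cubes,
  where \<open>s = log\<^sub>3 K / k\<close>.\<close>

lemma log_ratio_mem_assouad_exponents: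
  fixes Y :: "(real ^ 'n) set"
  assumes k: "k \<ge> 1" and K: "K > 1" and H: "triadic_cover_bound Y k K"
  shows "log 3 K / k \<in> assouad_exponents p Y"
proof -
  define N where "N = real CARD('n)"
  have N: "N \<ge> 1"
    unfolding N_def by simp
  define s where "s = log 3 K / k"
  have s: "s > 0"
    unfolding s_def using k K by simp
  have K_eq: "real K = 3 powr (real k * s)"
    unfolding s_def using k K by simp
  define C where "C = 3 ^ CARD('n) * (3 ^ (k + 1) * N) powr s"
  have "assouad_bound p Y C s"
    unfolding assouad_bound_def
  proof (intro allI impI)
    fix S r
    assume "S \<subseteq> Y \<and> lp_bounded p S" "0 < r \<and> r \<le> lp_diam p S"
    then have S: "S \<subseteq> Y" "lp_bounded p S" and r: "0 < r" "r \<le> lp_diam p S"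
      by simp_all
    define d where "d = lp_diam p S"
    obtain n v where side: "d \<le> cube_side n" "cube_side n \<le> 3 * d"
      and block: "\<forall>y\<in>S. \<exists>w\<in>child_offsets 1. y \<in> triadic_cube n (v + w)"
      using bounded_subset_triadic_block[OF S(2)] r unfolding d_def by (metis order_less_le_trans)
    have "cube_side n \<le> N * cube_side n"
      using N cube_side_pos[of n] by (simp add: mult_le_cancel_right1)
    then have "r \<le> N * cube_side n"
      using r side unfolding d_def by linarith
    then have "1 \<le> N * cube_side n / r"
      using r by (simp add: le_divide_eq)
    then have "\<exists>j. N * cube_side n / r \<le> 3 ^ (j * k) \<and> 3 ^ (j * k) \<le> 3 ^ k * (N * cube_side n / r)"
      using k by (intro exists_power_between) auto
    then obtain j where j: "N * cube_side n / r \<le> 3 ^ (j * k)" "3 ^ (j * k) \<le> 3 ^ k * (N * cube_side n / r)"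
      by blast
    have "N * cube_side (n + int (j * k)) \<le> r"
      using j(1) r unfolding cube_side_add by (simp add: field_simps)
    then have "\<exists>\<U>. lp_small_cover p Y r S \<U> \<and> card \<U> \<le> 3 ^ CARD('n) * K ^ j"
      using small_cover_of_triadic_block[OF triadic_cover_bound_iterate[OF H, of j] S(1) block] r
      unfolding N_def by simp
    then obtain \<U> where \<U>: "lp_small_cover p Y r S \<U>" "card \<U> \<le> 3 ^ CARD('n) * K ^ j"
      by blast
    have "real K ^ j = (3 ^ (j * k)) powr s"
      unfolding K_eq by (simp add: powr_realpow[symmetric] powr_powr powr_power mult.commute mult.left_commute)
    also have "\<dots> \<le> (3 ^ k * (N * cube_side n / r)) powr s"
      using j(2) s by (intro powr_mono2) auto
    also have "\<dots> \<le> (3 ^ (k + 1) * N * (d / r)) powr s"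
      using side r s N cube_side_pos[of n] by (intro powr_mono2) (auto simp: field_simps)
    also have "\<dots> = (3 ^ (k + 1) * N) powr s * (d / r) powr s"
      using N r side cube_side_pos[of n] by (subst powr_mult) auto
    finally have K_pow: "real K ^ j \<le> (3 ^ (k + 1) * N) powr s * (d / r) powr s" .
    have "real (card \<U>) \<le> real (3 ^ CARD('n) * K ^ j)"
      using \<U>(2) by (simp only: of_nat_le_iff)
    also have "\<dots> = 3 ^ CARD('n) * real K ^ j"
      by simp
    also have "\<dots> \<le> 3 ^ CARD('n) * ((3 ^ (k + 1) * N) powr s * (d / r) powr s)"
      using K_pow by (intro mult_left_mono) simp_all
    finally have "real (card \<U>) \<le> 3 ^ CARD('n) * ((3 ^ (k + 1) * N) powr s * (d / r) powr s)" .
    then show "\<exists>\<U>. lp_small_cover p Y r S \<U> \<and> real (card \<U>) \<le> C * (lp_diam p S / r) powr s"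
      using \<U>(1) unfolding C_def d_def by (auto simp: mult.assoc)
  qed
  moreover have "C > 0"
    unfolding C_def using N by simp
  ultimately show ?thesis
    unfolding assouad_exponents_def s_def[symmetric] using s by blast
qed

lemma assouad_dim_le_card: "assouad_dim p (Y :: (real ^ 'n) set) \<le> real CARD('n)"
proof -
  have "1 < (3::nat) ^ CARD('n)"
    by (rule one_less_power) simp_all
  then have "log 3 (3 ^ CARD('n)) / 1 \<in> assouad_exponents p Y"
    using log_ratio_mem_assouad_exponents[OF _ _ triadic_cover_bound_children[where Y=Y]] by simp
  then show ?thesis
    unfolding assouad_dim_eq_Inf_exponents by (auto intro: Inf_lower)
qed

end


section \<open>Lower bound via almost isometric grids\<close>

definition grid :: "nat \<Rightarrow> (real ^ 'n) set" where
  "grid m = (\<lambda>g. \<chi> i. real (g i) / real m) ` PiE UNIV (\<lambda>_. {..<m})"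

lemma mem_grid:
  assumes "\<sigma> \<in> grid m"
  shows "\<exists>g. (\<forall>i. g i < m) \<and> \<sigma> = (\<chi> i. real (g i) / real m)"
proof -
  obtain g where "g \<in> PiE UNIV (\<lambda>_. {..<m})" "\<sigma> = (\<chi> i. real (g i) / real m)"
    using assms unfolding grid_def by blast
  then show ?thesis
    by (intro exI[of _ g]) (auto simp: PiE_iff)
qed

lemma finite_grid: "finite (grid m :: (real ^ 'n::finite) set)"
  unfolding grid_def by (intro finite_imageI finite_PiE) auto

lemma card_grid:
  assumes "m \<ge> 1"
  shows "card (grid m :: (real ^ 'n::finite) set) = m ^ CARD('n)"
proof -
  have "inj_on (\<lambda>g. (\<chi> i. real (g i) / real m) :: real ^ 'n) (PiE UNIV (\<lambda>_. {..<m}))"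
  proof (rule inj_onI)
    fix g g' :: "'n \<Rightarrow> nat"
    assume "((\<chi> i. real (g i) / real m) :: real ^ 'n) = (\<chi> i. real (g' i) / real m)"
    then have "real (g i) / real m = real (g' i) / real m" for i
      by (metis vec_lambda_beta)
    then show "g = g'"
      using assms by (auto simp: divide_cancel_right)
  qed
  then show ?thesis
    unfolding grid_def by (simp add: card_image card_PiE)
qed

lemma grid_subset_unit_cube:
  assumes "m \<ge> 1"
  shows "grid m \<subseteq> unit_cube"
proof
  fix \<sigma> :: "real ^ 'n"
  assume "\<sigma> \<in> grid m"
  then obtain g where g: "\<And>i. g i < m" "\<sigma> = (\<chi> i. real (g i) / real m)"
    using mem_grid by blast
  have "real (g i) / real m \<le> 1" for i
    using g(1)[of i] assms by (simp add: divide_le_eq)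
  then show "\<sigma> \<in> unit_cube"
    unfolding unit_cube_def mem_box_cart g(2) by simp
qed

lemma grid_two_points:
  assumes "m \<ge> 2"
  shows "\<exists>\<sigma>\<in>grid m. \<exists>\<sigma>'\<in>grid m. \<sigma> \<noteq> (\<sigma>' :: real ^ 'n)"
proof -
  have "(\<chi> i. real ((\<lambda>_::'n. 0::nat) i) / real m) \<in> (grid m :: (real ^ 'n) set)"
    "(\<chi> i. real ((\<lambda>_::'n. 1::nat) i) / real m) \<in> (grid m :: (real ^ 'n) set)"
    unfolding grid_def using assms by (intro imageI; auto)+
  moreover have "(\<chi> i. real ((\<lambda>_::'n. 0::nat) i) / real m) \<noteq> (\<chi> i. real ((\<lambda>_::'n. 1::nat) i) / real m)"
    using assms by (simp add: vec_eq_iff)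
  ultimately show ?thesis
    by blast
qed

text \<open>The distortion \<open>1/(4m)\<close> keeps distinct grid points \<open>3/(4m)\<close> apart.\<close>

definition almost_isometric_grid :: "ereal \<Rightarrow> nat \<Rightarrow> real \<Rightarrow> (real ^ 'n \<Rightarrow> real ^ 'n) \<Rightarrow> bool" where
  "almost_isometric_grid p m u f \<longleftrightarrow>
     (\<forall>\<sigma>\<in>grid m. \<forall>\<sigma>'\<in>grid m. \<bar>u * lp_dist p (f \<sigma>) (f \<sigma>') - lp_dist p \<sigma> \<sigma>'\<bar> \<le> 1 / (4 * real m))"

context lp_exponent
begin

lemma lp_dist_le_card_in_unit_cube:
  assumes "x \<in> (unit_cube :: (real ^ 'n) set)" "y \<in> unit_cube"
  shows "lp_dist p x y \<le> real CARD('n)"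
proof -
  have "\<bar>x $ i - y $ i\<bar> \<le> 1" for i
  proof -
    have "0 \<le> x $ i" "x $ i \<le> 1" "0 \<le> y $ i" "y $ i \<le> 1"
      using assms unfolding unit_cube_def mem_box_cart by auto
    then show ?thesis
      unfolding abs_le_iff by linarith
  qed
  then show ?thesis
    using lp_dist_le_card_mult[of x y 1] by simp
qed

lemma lp_dist_grid_ge:
  assumes "m \<ge> 1" "\<sigma> \<in> grid m" "\<sigma>' \<in> grid m" "\<sigma> \<noteq> \<sigma>'"
  shows "1 / real m \<le> lp_dist p \<sigma> (\<sigma>' :: real ^ 'n)"
proof -
  obtain g g' where g: "\<sigma> = (\<chi> i. real (g i) / real m)" "\<sigma>' = (\<chi> i. real (g' i) / real m)"
    using mem_grid[OF assms(2)] mem_grid[OF assms(3)] by blast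
  then have "g \<noteq> g'"
    using assms(4) by blast
  then obtain i where i: "g i \<noteq> g' i"
    by (meson ext)
  have "1 \<le> \<bar>real (g i) - real (g' i)\<bar>"
    using i by linarith
  then have "1 / real m \<le> \<bar>real (g i) - real (g' i)\<bar> / real m"
    using assms(1) by (intro divide_right_mono) auto
  also have "\<dots> = \<bar>\<sigma> $ i - \<sigma>' $ i\<bar>"
    unfolding g by (simp add: diff_divide_distrib[symmetric])
  also have "\<dots> \<le> lp_dist p \<sigma> \<sigma>'"
    by (rule abs_component_le_lp_dist)
  finally show ?thesis .
qed

lemma card_le_card_small_cover:
  assumes cover: "lp_small_cover p Y r S \<U>"
    and separated: "\<And>x y. x \<in> S \<Longrightarrow> y \<in> S \<Longrightarrow> x \<noteq> y \<Longrightarrow> r < lp_dist p x y"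
  shows "card S \<le> card \<U>"
proof -
  have \<U>: "finite \<U>" "S \<subseteq> \<Union>\<U>" "\<And>U. U \<in> \<U> \<Longrightarrow> lp_bounded p U \<and> lp_diam p U \<le> r"
    using cover unfolding lp_small_cover_def by auto
  define h where "h x = (SOME U. U \<in> \<U> \<and> x \<in> U)" for x
  have h: "h x \<in> \<U> \<and> x \<in> h x" if "x \<in> S" for x
    unfolding h_def using \<U>(2) that by (metis (mono_tags, lifting) UnionE someI_ex subsetD)
  have "inj_on h S"
  proof (rule inj_onI, rule ccontr)
    fix x y
    assume xy: "x \<in> S" "y \<in> S" "h x = h y" "x \<noteq> y"
    then have "lp_dist p x y \<le> lp_diam p (h x)"
      using h[OF xy(1)] h[OF xy(2)] \<U>(3) by (metis lp_dist_le_lp_diam)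
    also have "\<dots> \<le> r"
      using h[OF xy(1)] \<U>(3) by blast
    finally show False
      using separated[OF xy(1,2,4)] by simp
  qed
  then show ?thesis
    using h \<U>(1) by (intro card_inj_on_le) auto
qed

lemma almost_isometric_grid_separated:
  assumes m: "m \<ge> 2" and f: "almost_isometric_grid p m u f"
    and \<sigma>: "\<sigma> \<in> grid m" "\<sigma>' \<in> grid m" "\<sigma> \<noteq> \<sigma>'"
  shows "3 / (4 * real m) \<le> u * lp_dist p (f \<sigma>) (f \<sigma>')"
proof -
  have "1 / real m \<le> lp_dist p \<sigma> \<sigma>'"
    using m \<sigma> by (intro lp_dist_grid_ge) auto
  moreover have "\<bar>u * lp_dist p (f \<sigma>) (f \<sigma>') - lp_dist p \<sigma> \<sigma>'\<bar> \<le> 1 / (4 * real m)"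
    using f \<sigma> unfolding almost_isometric_grid_def by blast
  moreover have "1 / real m - 1 / (4 * real m) = 3 / (4 * real m)"
    using m by (simp add: field_simps)
  ultimately show ?thesis
    unfolding abs_le_iff by linarith
qed

lemma almost_isometric_grid_bounded:
  fixes f :: "real ^ 'n \<Rightarrow> real ^ 'n"
  assumes m: "m \<ge> 2" and f: "almost_isometric_grid p m u f" and \<sigma>: "\<sigma> \<in> grid m" "\<sigma>' \<in> grid m"
  shows "u * lp_dist p (f \<sigma>) (f \<sigma>') \<le> real CARD('n) + 1"
proof -
  have "lp_dist p \<sigma> \<sigma>' \<le> real CARD('n)"
    using grid_subset_unit_cube[of m] m \<sigma> by (intro lp_dist_le_card_in_unit_cube) auto
  moreover have "\<bar>u * lp_dist p (f \<sigma>) (f \<sigma>') - lp_dist p \<sigma> \<sigma>'\<bar> \<le> 1 / (4 * real m)"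
    using f \<sigma> unfolding almost_isometric_grid_def by blast
  moreover have "1 / (4 * real m) \<le> 1"
    using m by simp
  ultimately show ?thesis
    unfolding abs_le_iff by linarith
qed

text \<open>An almost isometric copy of the grid of mesh \<open>1/m\<close> consists of \<open>m\<^sup>N\<close> separated points
  in a set of diameter \<open>O(1)\<close> relative to the mesh, so it needs \<open>m\<^sup>N\<close> sets of a cover at
  scale \<open>1/(2 m u)\<close>.\<close>

lemma grid_power_le_assouad_bound:
  fixes Y :: "(real ^ 'n) set" and f :: "real ^ 'n \<Rightarrow> real ^ 'n"
  assumes m: "m \<ge> 2" and u: "u > 0" and fY: "f ` grid m \<subseteq> Y" and f: "almost_isometric_grid p m u f"
    and C: "C > 0" and \<beta>: "\<beta> > 0" and bound: "assouad_bound p Y C \<beta>"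
  shows "real m ^ CARD('n) \<le> C * (2 * (real CARD('n) + 1)) powr \<beta> * real m powr \<beta>"
proof -
  define N where "N = real CARD('n)"
  define S where "S = f ` grid m"
  define r where "r = 1 / (2 * real m * u)"
  have m_pos: "real m > 0" and r: "r > 0"
    using m u unfolding r_def by auto
  have "u * r = 1 / (2 * real m)"
    using u unfolding r_def by simp
  also have "\<dots> < 3 / (4 * real m)"
    using m_pos by (simp add: divide_simps)
  finally have ur: "u * r < 3 / (4 * real m)" .
  have r_less: "r < lp_dist p (f \<sigma>) (f \<sigma>')"
    if "\<sigma> \<in> grid m" "\<sigma>' \<in> grid m" "\<sigma> \<noteq> \<sigma>'" for \<sigma> \<sigma>'
  proof -
    have "u * r < u * lp_dist p (f \<sigma>) (f \<sigma>')"
      using almost_isometric_grid_separated[OF m f that] ur by linarith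
    then show ?thesis
      using mult_less_cancel_left_pos[OF u] by blast
  qed
  have "inj_on f (grid m)"
  proof (rule inj_onI, rule ccontr)
    fix \<sigma> \<sigma>'
    assume "\<sigma> \<in> grid m" "\<sigma>' \<in> grid m" "f \<sigma> = f \<sigma>'" "\<sigma> \<noteq> \<sigma>'"
    then show False
      using r_less[of \<sigma> \<sigma>'] r by simp
  qed
  then have card_S: "card S = m ^ CARD('n)"
    unfolding S_def using card_grid[of m] m by (simp add: card_image)
  have separated_S: "r < lp_dist p x y" if "x \<in> S" "y \<in> S" "x \<noteq> y" for x y
    using that r_less unfolding S_def by blast
  have diam: "lp_dist p x y \<le> (N + 1) / u" if "x \<in> S" "y \<in> S" for x y
    using that almost_isometric_grid_bounded[OF m f] u unfolding S_def N_def
    by (auto simp: field_simps)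
  then have S_bounded: "lp_bounded p S"
    unfolding lp_bounded_def by blast
  obtain \<sigma> \<sigma>' :: "real ^ 'n" where "\<sigma> \<in> grid m" "\<sigma>' \<in> grid m" "\<sigma> \<noteq> \<sigma>'"
    using grid_two_points[OF m] by blast
  then have "r \<le> lp_diam p S"
    using r_less[of \<sigma> \<sigma>'] lp_dist_le_lp_diam[OF S_bounded, of "f \<sigma>" "f \<sigma>'"] unfolding S_def by simp
  then obtain \<U> where \<U>: "lp_small_cover p Y r S \<U>" "real (card \<U>) \<le> C * (lp_diam p S / r) powr \<beta>"
    using bound r S_bounded fY unfolding assouad_bound_def S_def by blast
  have "u * lp_diam p S \<le> N + 1"
    using diam \<open>\<sigma> \<in> grid m\<close> u unfolding S_def by (subst mult.commute, subst pos_le_divide_eq[symmetric])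
      (auto intro: lp_diam_le)
  have "lp_diam p S / r = (u * lp_diam p S) * (2 * real m)"
    unfolding r_def using u m_pos by (simp add: field_simps)
  also have "\<dots> \<le> (N + 1) * (2 * real m)"
    using \<open>u * lp_diam p S \<le> N + 1\<close> m_pos by (intro mult_right_mono) auto
  finally have "(lp_diam p S / r) powr \<beta> \<le> (2 * (N + 1) * real m) powr \<beta>"
    using \<open>r \<le> lp_diam p S\<close> r \<beta> by (intro powr_mono2) (auto simp: mult_ac)
  have "real m ^ CARD('n) \<le> real (card \<U>)"
    using card_le_card_small_cover[OF \<U>(1) separated_S] card_S by simp
  also have "\<dots> \<le> C * (2 * (N + 1) * real m) powr \<beta>"
    using \<U>(2) \<open>(lp_diam p S / r) powr \<beta> \<le> _\<close> C by (meson mult_left_mono less_imp_le order_trans)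
  also have "\<dots> = C * (2 * (N + 1)) powr \<beta> * real m powr \<beta>"
    unfolding N_def by (subst powr_mult) auto
  finally show ?thesis
    unfolding N_def .
qed

end

lemma le_of_power_le_const_mult_powr:
  fixes C \<beta> :: real
  assumes C: "C > 0" and bound: "\<And>m::nat. m \<ge> 2 \<Longrightarrow> real m ^ N \<le> C * real m powr \<beta>"
  shows "real N \<le> \<beta>"
proof (rule ccontr)
  assume "\<not> real N \<le> \<beta>"
  then have gap: "real N - \<beta> > 0"
    by simp
  define t where "t = (C + 1) powr (1 / (real N - \<beta>))"
  define m where "m = nat \<lceil>t\<rceil> + 2"
  have m: "m \<ge> 2" "t \<le> real m" "real m > 0"
    unfolding m_def by linarith+
  have t: "t > 0"
    unfolding t_def using C by simp
  have "C + 1 = t powr (real N - \<beta>)"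
    unfolding t_def using gap C by (simp add: powr_powr)
  also have "\<dots> \<le> real m powr (real N - \<beta>)"
    using m t gap by (intro powr_mono2) auto
  finally have "(C + 1) * real m powr \<beta> \<le> real m powr (real N - \<beta>) * real m powr \<beta>"
    by (simp add: mult_right_mono)
  also have "\<dots> = real m ^ N"
    using m by (simp add: powr_add[symmetric] powr_realpow)
  moreover have "real m powr \<beta> > 0"
    using m by simp
  ultimately show False
    using bound[OF m(1)] by (simp add: distrib_right)
qed

definition approximates_grids :: "ereal \<Rightarrow> (real ^ 'n) set \<Rightarrow> bool" where
  "approximates_grids p Y \<longleftrightarrow>
     (\<forall>m::nat. m \<ge> 2 \<longrightarrow> (\<exists>u>0. \<exists>f. f ` grid m \<subseteq> Y \<and> almost_isometric_grid p m u f))"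

lemma approximates_grids_UNIV: "approximates_grids p UNIV"
  unfolding approximates_grids_def almost_isometric_grid_def by (auto intro!: exI[of _ 1] exI[of _ id])

context lp_exponent
begin

lemma assouad_dim_eq_card_if_approximates_grids:
  fixes Y :: "(real ^ 'n) set"
  assumes "approximates_grids p Y"
  shows "assouad_dim p Y = real CARD('n)"
proof (rule antisym)
  have "real CARD('n) \<le> \<beta>" if exponent: "\<beta> \<in> assouad_exponents p Y" for \<beta>
  proof -
    obtain C where C: "C > 0" and \<beta>: "\<beta> > 0" and bound: "assouad_bound p Y C \<beta>"
      using exponent unfolding assouad_exponents_def by blast
    show ?thesis
    proof (rule le_of_power_le_const_mult_powr)
      fix m :: nat
      assume "m \<ge> 2"
      then obtain u and f :: "real ^ 'n \<Rightarrow> real ^ 'n"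
        where f: "u > 0" "f ` grid m \<subseteq> Y" "almost_isometric_grid p m u f"
        using assms unfolding approximates_grids_def by blast
      show "real m ^ CARD('n) \<le> C * (2 * (real CARD('n) + 1)) powr \<beta> * real m powr \<beta>"
        by (rule grid_power_le_assouad_bound[OF \<open>m \<ge> 2\<close> f C \<beta> bound])
    qed (use C in simp)
  qed
  then show "ereal (real CARD('n)) \<le> assouad_dim p Y"
    unfolding assouad_dim_eq_Inf_exponents by (auto intro: Inf_greatest)
qed (rule assouad_dim_le_card)

lemma assouad_dim_UNIV: "assouad_dim p (UNIV :: (real ^ 'n) set) = real CARD('n)"
  using assouad_dim_eq_card_if_approximates_grids approximates_grids_UNIV by blast

end


section \<open>Cubes in which the set is relatively dense\<close>

definition cube_dense :: "ereal \<Rightarrow> (real ^ 'n) set \<Rightarrow> bool" where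
  "cube_dense p F \<longleftrightarrow> (\<forall>\<epsilon>>0. \<exists>n v. \<forall>y\<in>triadic_cube n v.
     \<exists>x\<in>F \<inter> triadic_cube n v. lp_dist p x y \<le> \<epsilon> * cube_side n)"

lemma exists_inverse_power_less:
  fixes c \<epsilon> :: real
  assumes "\<epsilon> > 0"
  shows "\<exists>k::nat. k \<ge> 1 \<and> c / 3 ^ k < \<epsilon>"
proof -
  obtain k where k: "c / \<epsilon> < 3 ^ k"
    using real_arch_pow[of 3 "c / \<epsilon>"] by auto
  have "(3::real) ^ k \<le> 3 ^ Suc k"
    by simp
  then have "c / \<epsilon> < 3 ^ Suc k"
    using k by linarith
  then have "c / 3 ^ Suc k < \<epsilon>"
    using assms by (simp add: field_simps)
  then show ?thesis
    by (intro exI[of _ "Suc k"]) simp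
qed

context lp_exponent
begin

text \<open>If \<open>F\<close> is not cube dense, some \<open>\<epsilon>\<close> works against every cube: each cube contains a point
  \<open>\<epsilon>\<close>-far from \<open>F\<close>, so the child of generation \<open>k\<close> containing that point misses \<open>F\<close>
  once \<open>N / 3\<^sup>k < \<epsilon>\<close>.\<close>

lemma triadic_cover_bound_if_not_cube_dense:
  fixes F :: "(real ^ 'n) set"
  assumes "\<not> cube_dense p F"
  shows "\<exists>k\<ge>1. triadic_cover_bound F k (3 ^ (k * CARD('n)) - 1)"
proof -
  obtain \<epsilon> where \<epsilon>: "\<epsilon> > 0"
    and far: "\<And>n v. \<exists>y\<in>triadic_cube n v. \<forall>x\<in>F \<inter> triadic_cube n v. \<epsilon> * cube_side n < lp_dist p x y"
    using assms unfolding cube_dense_def by (auto simp: not_le)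
  obtain k :: nat where k: "k \<ge> 1" "real CARD('n) / 3 ^ k < \<epsilon>"
    using exists_inverse_power_less[OF \<epsilon>] by blast
  have "\<exists>W. finite W \<and> card W \<le> 3 ^ (k * CARD('n)) - 1 \<and>
      triadic_cube n v \<inter> F \<subseteq> (\<Union>w\<in>W. triadic_cube (n + int k) w)" for n v
  proof -
    obtain y where y: "y \<in> triadic_cube n v"
      and y_far: "\<forall>x\<in>F \<inter> triadic_cube n v. \<epsilon> * cube_side n < lp_dist p x y"
      using far by blast
    obtain w0 where w0: "w0 \<in> child_offsets k" "y \<in> triadic_cube (n + int k) (3 ^ k *s v + w0)"
      using triadic_cube_subset_children[OF y] by blast
    define W where "W = (\<lambda>w. 3 ^ k *s v + w) ` (child_offsets k - {w0})"
    have "card W \<le> card (child_offsets k - {w0})"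
      unfolding W_def by (rule card_image_le) (simp add: finite_child_offsets)
    also have "\<dots> \<le> 3 ^ (k * CARD('n)) - 1"
      using w0(1) finite_child_offsets card_child_offsets_le[of k, where 'n='n] by simp
    finally have "card W \<le> 3 ^ (k * CARD('n)) - 1" .
    moreover have "triadic_cube n v \<inter> F \<subseteq> (\<Union>w\<in>W. triadic_cube (n + int k) w)"
    proof
      fix x
      assume x: "x \<in> triadic_cube n v \<inter> F"
      obtain w where w: "w \<in> child_offsets k" "x \<in> triadic_cube (n + int k) (3 ^ k *s v + w)"
        using triadic_cube_subset_children x by blast
      have "w \<noteq> w0"
      proof
        assume "w = w0"
        then have "lp_dist p x y \<le> real CARD('n) * cube_side (n + int k)"
          using lp_dist_le_in_triadic_cube w(2) w0(2) by blast
        also have "\<dots> = real CARD('n) / 3 ^ k * cube_side n"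
          unfolding cube_side_add by simp
        also have "\<dots> \<le> \<epsilon> * cube_side n"
          using k(2) cube_side_pos[of n] by (intro mult_right_mono) auto
        finally show False
          using y_far x by force
      qed
      then show "x \<in> (\<Union>w\<in>W. triadic_cube (n + int k) w)"
        unfolding W_def using w by blast
    qed
    moreover have "finite W"
      unfolding W_def by (simp add: finite_child_offsets)
    ultimately show ?thesis
      by blast
  qed
  then show ?thesis
    unfolding triadic_cover_bound_def using k(1) by blast
qed

lemma assouad_dim_less_card_if_not_cube_dense:
  fixes F :: "(real ^ 'n) set"
  assumes "\<not> cube_dense p F"
  shows "assouad_dim p F < real CARD('n)"
proof -
  obtain k where k: "k \<ge> 1" and H: "triadic_cover_bound F k (3 ^ (k * CARD('n)) - 1)"
    using triadic_cover_bound_if_not_cube_dense[OF assms] by blast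
  define K where "K = 3 ^ (k * CARD('n)) - (1::nat)"
  have "(3::nat) ^ 1 \<le> 3 ^ (k * CARD('n))"
    using k by (intro power_increasing) auto
  then have K: "K > 1" "real K < 3 ^ (k * CARD('n))"
    unfolding K_def by auto
  have le: "assouad_dim p F \<le> ereal (log 3 K / k)"
    using log_ratio_mem_assouad_exponents[OF k K(1) H[folded K_def]]
    unfolding assouad_dim_eq_Inf_exponents by (rule Inf_lower[OF imageI])
  have "log 3 K < log 3 (3 ^ (k * CARD('n)))"
    using K by (subst log_less_cancel_iff) auto
  then have "log 3 K / k < real CARD('n)"
    using k by (simp add: log_nat_power divide_less_eq mult.commute)
  then show ?thesis
    using le by (simp add: le_less_trans)
qed

lemma cube_dense_if_approximates_grids:
  fixes F :: "(real ^ 'n) set"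
  assumes "approximates_grids p F"
  shows "cube_dense p F"
  using assouad_dim_eq_card_if_approximates_grids[OF assms] assouad_dim_less_card_if_not_cube_dense
  by fastforce

lemma cube_dense_finite_net:
  fixes F :: "(real ^ 'n) set"
  assumes dense: "cube_dense p F" and \<epsilon>: "\<epsilon> > 0"
  shows "\<exists>n v A. finite A \<and> A \<subseteq> F \<inter> triadic_cube n v \<and>
           (\<forall>y\<in>triadic_cube n v. \<exists>x\<in>A. lp_dist p x y \<le> \<epsilon> * cube_side n)"
proof -
  obtain n v where nv: "\<forall>y\<in>triadic_cube n v. \<exists>x\<in>F \<inter> triadic_cube n v. lp_dist p x y \<le> \<epsilon> / 2 * cube_side n"
    using dense \<epsilon> unfolding cube_dense_def by (meson half_gt_zero)
  obtain k :: nat where k: "real CARD('n) / 3 ^ k < \<epsilon> / 2"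
    using exists_inverse_power_less[of "\<epsilon> / 2"] \<epsilon> by auto
  define c where "c w = (\<chi> i. cube_side (n + int k) * real_of_int ((3 ^ k *s v + w) $ i))" for w
  have c: "c w \<in> triadic_cube (n + int k) (3 ^ k *s v + w)" for w
    unfolding c_def by (rule triadic_cube_center)
  have "\<forall>w\<in>child_offsets k. \<exists>x. x \<in> F \<inter> triadic_cube n v \<and> lp_dist p x (c w) \<le> \<epsilon> / 2 * cube_side n"
    using nv c triadic_child_subset by blast
  then obtain x where x: "\<forall>w\<in>child_offsets k. x w \<in> F \<inter> triadic_cube n v \<and>
      lp_dist p (x w) (c w) \<le> \<epsilon> / 2 * cube_side n"
    by metis
  have "\<exists>x'\<in>x ` child_offsets k. lp_dist p x' y \<le> \<epsilon> * cube_side n" if y: "y \<in> triadic_cube n v" for y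
  proof -
    obtain w where w: "w \<in> child_offsets k" "y \<in> triadic_cube (n + int k) (3 ^ k *s v + w)"
      using triadic_cube_subset_children[OF y] by blast
    have "lp_dist p (c w) y \<le> real CARD('n) * cube_side (n + int k)"
      using lp_dist_le_in_triadic_cube[OF c w(2)] .
    also have "\<dots> = real CARD('n) / 3 ^ k * cube_side n"
      unfolding cube_side_add by simp
    also have "\<dots> \<le> \<epsilon> / 2 * cube_side n"
      using k cube_side_pos[of n] by (intro mult_right_mono) auto
    finally have "lp_dist p (x w) y \<le> \<epsilon> / 2 * cube_side n + \<epsilon> / 2 * cube_side n"
      using lp_dist_triangle[of "x w" y "c w"] x w(1) by fastforce
    then show ?thesis
      using w(1) by auto
  qed
  moreover have "finite (x ` child_offsets k)" "x ` child_offsets k \<subseteq> F \<inter> triadic_cube n v"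
    using x finite_child_offsets by auto
  ultimately show ?thesis
    by blast
qed

lemma GH_dist_triadic_cube_le:
  fixes X A :: "(real ^ 'n) set"
  assumes "A \<subseteq> X" "X \<subseteq> triadic_cube n v" "\<epsilon> \<ge> 0"
    and net: "\<forall>y\<in>triadic_cube n v. \<exists>x\<in>A. lp_dist p x y \<le> \<epsilon> * cube_side n"
  shows "GH_dist X (\<lambda>x y. (1 / cube_side n) * lp_dist p x y) (unit_cube :: (real ^ 'n) set) (lp_dist p)
    \<le> ereal \<epsilon>"
proof -
  define d where "d x y = (1 / cube_side n) * lp_dist p x y" for x y :: "real ^ 'n"
  have s: "cube_side n > 0"
    by (rule cube_side_pos)
  have metric: "metric_on UNIV d"
    unfolding d_def using s by (intro metric_on_scaled_lp_dist) simp
  have dY: "lp_dist p y y' = d (cube_param n v y) (cube_param n v y')"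
    if "y \<in> unit_cube" "y' \<in> unit_cube" for y y'
    unfolding d_def using s by (simp add: lp_dist_cube_param)
  have inj: "inj_on (cube_param n v) unit_cube"
    using s by (intro inj_onI) (simp add: cube_param_def)
  have close_X: "\<exists>y\<in>unit_cube. d (id x) (cube_param n v y) \<le> \<epsilon>" if "x \<in> X" for x
  proof -
    obtain y where "y \<in> unit_cube" "x = cube_param n v y"
      using \<open>x \<in> X\<close> assms(2) cube_param_image by blast
    then show ?thesis
      using assms(3) by (intro bexI[of _ y]) (auto simp: d_def)
  qed
  have close_Y: "\<exists>x\<in>X. d (id x) (cube_param n v y) \<le> \<epsilon>" if "y \<in> unit_cube" for y
  proof -
    obtain x where "x \<in> A" "lp_dist p x (cube_param n v y) \<le> \<epsilon> * cube_side n"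
      using net cube_param_mem[OF \<open>y \<in> unit_cube\<close>] by blast
    then show ?thesis
      using assms(1) s by (auto simp: d_def field_simps)
  qed
  have "GH_dist X d (unit_cube :: (real ^ 'n) set) (lp_dist p) \<le> ereal \<epsilon>"
    by (rule GH_dist_le_via_embeddings[OF metric _ _ inj_on_id inj _ dY assms(3) close_X close_Y]) simp_all
  then show ?thesis
    unfolding d_def .
qed

lemma cube_dense_tangent_cubes:
  fixes F :: "(real ^ 'n) set"
  assumes "cube_dense p F"
  shows "\<exists>n v A. \<forall>i. finite (A i) \<and> A i \<subseteq> F \<inter> triadic_cube (n i) (v i) \<and>
    (\<forall>X. A i \<subseteq> X \<and> X \<subseteq> triadic_cube (n i) (v i) \<longrightarrow>
       GH_dist X (\<lambda>x y. (1 / cube_side (n i)) * lp_dist p x y) (unit_cube :: (real ^ 'n) set) (lp_dist p)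
       \<le> ereal (1 / Suc i))"
proof -
  have "\<exists>n v A. finite A \<and> A \<subseteq> F \<inter> triadic_cube n v \<and>
      (\<forall>y\<in>triadic_cube n v. \<exists>x\<in>A. lp_dist p x y \<le> 1 / Suc i * cube_side n)" for i
    by (rule cube_dense_finite_net[OF assms]) simp
  then have "\<forall>i. \<exists>n v A. finite A \<and> A \<subseteq> F \<inter> triadic_cube n v \<and>
      (\<forall>y\<in>triadic_cube n v. \<exists>x\<in>A. lp_dist p x y \<le> 1 / Suc i * cube_side n)"
    by blast
  then obtain n v A where A: "\<And>i. finite (A i) \<and> A i \<subseteq> F \<inter> triadic_cube (n i) (v i) \<and>
      (\<forall>y\<in>triadic_cube (n i) (v i). \<exists>x\<in>A i. lp_dist p x y \<le> 1 / Suc i * cube_side (n i))"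
    by metis
  have "GH_dist X (\<lambda>x y. (1 / cube_side (n i)) * lp_dist p x y) (unit_cube :: (real ^ 'n) set) (lp_dist p)
      \<le> ereal (1 / Suc i)" if "A i \<subseteq> X" "X \<subseteq> triadic_cube (n i) (v i)" for i X
    using A[of i] by (intro GH_dist_triadic_cube_le[OF that]) auto
  then show ?thesis
    using A by (intro exI[of _ n] exI[of _ v] exI[of _ A]) blast
qed

end

lemma ereal_tendsto_0_if_le_inverse_Suc:
  fixes f :: "nat \<Rightarrow> ereal"
  assumes "\<And>i. 0 \<le> f i" "\<And>i. f i \<le> ereal (1 / Suc i)"
  shows "f \<longlonglongrightarrow> 0"
proof (rule tendsto_sandwich[OF always_eventually always_eventually tendsto_const])
  show "(\<lambda>i. ereal (1 / Suc i)) \<longlonglongrightarrow> 0"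
    using tendsto_ereal[OF LIMSEQ_inverse_real_of_nat] by (simp add: zero_ereal_def inverse_eq_divide)
qed (use assms in auto)

context lp_exponent
begin

lemma in_tpc_if_cube_dense:
  fixes F :: "(real ^ 'n) set"
  assumes "cube_dense p F"
  shows "in_tpc p F"
proof -
  obtain n v A where seq: "\<forall>i. finite (A i) \<and> A i \<subseteq> F \<inter> triadic_cube (n i) (v i) \<and>
    (\<forall>X. A i \<subseteq> X \<and> X \<subseteq> triadic_cube (n i) (v i) \<longrightarrow>
       GH_dist X (\<lambda>x y. (1 / cube_side (n i)) * lp_dist p x y) (unit_cube :: (real ^ 'n) set) (lp_dist p)
       \<le> ereal (1 / Suc i))"
    using cube_dense_tangent_cubes[OF assms] by blast
  then have A: "finite (A i) \<and> A i \<subseteq> F \<inter> triadic_cube (n i) (v i)"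
    and GH: "A i \<subseteq> X \<Longrightarrow> X \<subseteq> triadic_cube (n i) (v i) \<Longrightarrow>
       GH_dist X (\<lambda>x y. (1 / cube_side (n i)) * lp_dist p x y) (unit_cube :: (real ^ 'n) set) (lp_dist p)
       \<le> ereal (1 / Suc i)" for i X
    by blast+
  have "GH_dist (triadic_cube (n i) (v i) \<inter> F) (\<lambda>x y. (1 / cube_side (n i)) * lp_dist p x y)
      (unit_cube :: (real ^ 'n) set) (lp_dist p) \<le> ereal (1 / Suc i)" for i
    by (rule GH) (use A in auto)
  then have "(\<lambda>i. GH_dist (triadic_cube (n i) (v i) \<inter> F) (\<lambda>x y. (1 / cube_side (n i)) * lp_dist p x y)
      (unit_cube :: (real ^ 'n) set) (lp_dist p)) \<longlonglongrightarrow> 0"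
    by (rule ereal_tendsto_0_if_le_inverse_Suc[OF GH_dist_nonneg])
  then show ?thesis
    unfolding in_tpc_def using cube_side_pos
    by (intro exI[of _ n] exI[of _ v] exI[of _ "\<lambda>i. 1 / cube_side (n i)"]) simp
qed

lemma in_kpc_if_cube_dense:
  fixes F :: "(real ^ 'n) set"
  assumes "cube_dense p F"
  shows "in_kpc p F"
proof -
  obtain n v A where seq: "\<forall>i. finite (A i) \<and> A i \<subseteq> F \<inter> triadic_cube (n i) (v i) \<and>
    (\<forall>X. A i \<subseteq> X \<and> X \<subseteq> triadic_cube (n i) (v i) \<longrightarrow>
       GH_dist X (\<lambda>x y. (1 / cube_side (n i)) * lp_dist p x y) (unit_cube :: (real ^ 'n) set) (lp_dist p)
       \<le> ereal (1 / Suc i))"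
    using cube_dense_tangent_cubes[OF assms] by blast
  then have A: "finite (A i) \<and> A i \<subseteq> F \<inter> triadic_cube (n i) (v i)"
    and GH: "A i \<subseteq> X \<Longrightarrow> X \<subseteq> triadic_cube (n i) (v i) \<Longrightarrow>
       GH_dist X (\<lambda>x y. (1 / cube_side (n i)) * lp_dist p x y) (unit_cube :: (real ^ 'n) set) (lp_dist p)
       \<le> ereal (1 / Suc i)" for i X
    by blast+
  have "GH_dist (A i) (\<lambda>x y. (1 / cube_side (n i)) * lp_dist p x y)
      (unit_cube :: (real ^ 'n) set) (lp_dist p) \<le> ereal (1 / Suc i)" for i
    by (rule GH) (use A in auto)
  then have "(\<lambda>i. GH_dist (A i) (\<lambda>x y. (1 / cube_side (n i)) * lp_dist p x y)
      (unit_cube :: (real ^ 'n) set) (lp_dist p)) \<longlonglongrightarrow> 0"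
    by (rule ereal_tendsto_0_if_le_inverse_Suc[OF GH_dist_nonneg])
  moreover have "A i \<subseteq> F \<and> compact (A i) \<and> 1 / cube_side (n i) > 0" for i
    using A[of i] cube_side_pos[of "n i"] finite_imp_compact by auto
  ultimately show ?thesis
    unfolding in_kpc_def by (intro exI[of _ A] exI[of _ "\<lambda>i. 1 / cube_side (n i)"]) simp
qed

lemma asymptotic_steinhaus_if_cube_dense:
  fixes F :: "(real ^ 'n) set"
  assumes "cube_dense p F"
  shows "asymptotic_steinhaus p F"
  unfolding asymptotic_steinhaus_def
proof (intro allI impI)
  fix \<epsilon> :: real and S :: "(real ^ 'n) set"
  assume \<epsilon>: "\<epsilon> > 0" and S: "finite S \<and> S \<subseteq> unit_cube"
  obtain n v A where A: "A \<subseteq> F \<inter> triadic_cube n v"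
    and net: "\<forall>y\<in>triadic_cube n v. \<exists>x\<in>A. lp_dist p x y \<le> \<epsilon> * cube_side n"
    using cube_dense_finite_net[OF assms \<epsilon>] by blast
  have "\<forall>\<sigma>\<in>S. \<exists>x. x \<in> A \<and> lp_dist p x (cube_param n v \<sigma>) \<le> \<epsilon> * cube_side n"
    using net S cube_param_mem by blast
  then obtain x where x: "\<forall>\<sigma>\<in>S. x \<sigma> \<in> A \<and> lp_dist p (x \<sigma>) (cube_param n v \<sigma>) \<le> \<epsilon> * cube_side n"
    by metis
  have "GH_dist (x ` S) (lp_dist p) S (\<lambda>y y'. cube_side n * lp_dist p y y') \<le> ereal (\<epsilon> * cube_side n)"
  proof (rule GH_dist_le_via_embeddings[where Z = UNIV and dZ = "lp_dist p"
        and \<alpha> = id and \<beta> = "cube_param n v"])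
    show "metric_on UNIV (lp_dist p)"
      using metric_on_scaled_lp_dist[of 1] by simp
    show "inj_on (cube_param n v) S"
      using cube_side_pos[of n] by (intro inj_onI) (simp add: cube_param_def)
  qed (use x \<epsilon> cube_side_pos[of n] in \<open>auto simp: lp_dist_cube_param\<close>)
  moreover have "finite (x ` S)" "x ` S \<subseteq> F"
    using S x A by auto
  ultimately show "\<exists>T \<delta>. finite T \<and> T \<subseteq> F \<and> \<delta> > 0 \<and>
      GH_dist T (lp_dist p) S (\<lambda>x y. \<delta> * lp_dist p x y) \<le> ereal (\<delta> * \<epsilon>)"
    using cube_side_pos[of n] by (intro exI[of _ "x ` S"] exI[of _ "cube_side n"]) (simp add: mult.commute)
qed

end

lemma in_pc_if_in_tpc:
  fixes F :: "(real ^ 'n) set"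
  assumes "in_tpc p F"
  shows "in_pc p F"
proof -
  obtain n v u where "\<forall>i. u i > 0"
    "(\<lambda>i. GH_dist (triadic_cube (n i) (v i) \<inter> F) (\<lambda>x y. u i * lp_dist p x y) (unit_cube :: (real ^ 'n) set) (lp_dist p))
       \<longlonglongrightarrow> 0"
    using assms unfolding in_tpc_def by blast
  then show ?thesis
    unfolding in_pc_def by (intro exI[of _ "\<lambda>i. triadic_cube (n i) (v i) \<inter> F"] exI[of _ u]) simp
qed

lemma in_pc_if_in_kpc:
  fixes F :: "(real ^ 'n) set"
  assumes "in_kpc p F"
  shows "in_pc p F"
proof -
  obtain A u where "\<forall>i. A i \<subseteq> F \<and> compact (A i) \<and> u i > 0"
    "(\<lambda>i. GH_dist (A i) (\<lambda>x y. u i * lp_dist p x y) (unit_cube :: (real ^ 'n) set) (lp_dist p)) \<longlonglongrightarrow> 0"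
    using assms unfolding in_kpc_def by blast
  then show ?thesis
    unfolding in_pc_def by (intro exI[of _ A] exI[of _ u]) simp
qed

lemma approximates_grids_if_in_pc:
  fixes F :: "(real ^ 'n) set"
  assumes "in_pc p F"
  shows "approximates_grids p F"
  unfolding approximates_grids_def
proof (intro allI impI)
  fix m :: nat
  assume m: "m \<ge> 2"
  obtain A u where Au: "\<forall>i. A i \<subseteq> F \<and> u i > 0"
    and lim: "(\<lambda>i. GH_dist (A i) (\<lambda>x y. u i * lp_dist p x y) (unit_cube :: (real ^ 'n) set) (lp_dist p)) \<longlonglongrightarrow> 0"
    using assms unfolding in_pc_def by blast
  have "0 < ereal (1 / (8 * real m))"
    using m by simp
  from order_tendstoD(2)[OF lim this] obtain i
    where "GH_dist (A i) (\<lambda>x y. u i * lp_dist p x y) (unit_cube :: (real ^ 'n) set) (lp_dist p) < ereal (1 / (8 * real m))"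
    by (meson eventually_sequentially order.refl)
  then obtain f where f: "\<forall>y\<in>(unit_cube :: (real ^ 'n) set). f y \<in> A i \<and>
      (\<forall>y'\<in>unit_cube. \<bar>u i * lp_dist p (f y) (f y') - lp_dist p y y'\<bar> < 2 * (1 / (8 * real m)))"
    using GH_dist_less_imp_distortion by blast
  have grid: "(grid m :: (real ^ 'n) set) \<subseteq> unit_cube"
    using m by (intro grid_subset_unit_cube) simp
  have image: "f ` grid m \<subseteq> F"
    using f grid Au by blast
  have distortion: "almost_isometric_grid p m (u i) f"
    unfolding almost_isometric_grid_def
  proof (intro ballI)
    fix \<sigma> \<sigma>' :: "real ^ 'n"
    assume "\<sigma> \<in> grid m" "\<sigma>' \<in> grid m"
    then have "\<sigma> \<in> unit_cube" "\<sigma>' \<in> unit_cube"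
      using grid by blast+
    then have "\<bar>u i * lp_dist p (f \<sigma>) (f \<sigma>') - lp_dist p \<sigma> \<sigma>'\<bar> < 2 * (1 / (8 * real m))"
      using f by blast
    moreover have "2 * (1 / (8 * real m)) = 1 / (4 * real m)"
      by simp
    ultimately show "\<bar>u i * lp_dist p (f \<sigma>) (f \<sigma>') - lp_dist p \<sigma> \<sigma>'\<bar> \<le> 1 / (4 * real m)"
      by linarith
  qed
  show "\<exists>u>0. \<exists>f. f ` grid m \<subseteq> F \<and> almost_isometric_grid p m u f"
  proof (intro exI[of _ "u i"] conjI exI[of _ f])
    show "0 < u i"
      using Au by blast
  qed (fact image distortion)+
qed

lemma approximates_grids_if_asymptotic_steinhaus:
  fixes F :: "(real ^ 'n) set"
  assumes "asymptotic_steinhaus p F"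
  shows "approximates_grids p F"
  unfolding approximates_grids_def
proof (intro allI impI)
  fix m :: nat
  assume m: "m \<ge> 2"
  then have grid: "finite (grid m :: (real ^ 'n) set) \<and> grid m \<subseteq> unit_cube"
    using grid_subset_unit_cube[of m] by (simp add: finite_grid)
  have "1 / (16 * real m) > 0"
    using m by simp
  from assms[unfolded asymptotic_steinhaus_def, rule_format, OF this grid]
  obtain T \<delta> where T: "T \<subseteq> F" "\<delta> > 0"
    and GH: "GH_dist T (lp_dist p) (grid m :: (real ^ 'n) set) (\<lambda>x y. \<delta> * lp_dist p x y)
      \<le> ereal (\<delta> * (1 / (16 * real m)))"
    by blast
  have "ereal (\<delta> * (1 / (16 * real m))) < ereal (\<delta> / (8 * real m))"
    using T(2) m by (simp add: field_simps)
  then obtain f where f: "\<forall>\<sigma>\<in>(grid m :: (real ^ 'n) set). f \<sigma> \<in> T \<and>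
      (\<forall>\<sigma>'\<in>grid m. \<bar>lp_dist p (f \<sigma>) (f \<sigma>') - \<delta> * lp_dist p \<sigma> \<sigma>'\<bar> < 2 * (\<delta> / (8 * real m)))"
    using GH_dist_less_imp_distortion[OF le_less_trans[OF GH]] by blast
  have distortion: "\<bar>1 / \<delta> * lp_dist p (f \<sigma>) (f \<sigma>') - lp_dist p \<sigma> \<sigma>'\<bar> \<le> 1 / (4 * real m)"
    if "\<sigma> \<in> grid m" "\<sigma>' \<in> grid m" for \<sigma> \<sigma>' :: "real ^ 'n"
  proof -
    have "1 / \<delta> * lp_dist p (f \<sigma>) (f \<sigma>') - lp_dist p \<sigma> \<sigma>'
        = (lp_dist p (f \<sigma>) (f \<sigma>') - \<delta> * lp_dist p \<sigma> \<sigma>') / \<delta>"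
      using T(2) by (simp add: field_simps)
    then have "\<bar>1 / \<delta> * lp_dist p (f \<sigma>) (f \<sigma>') - lp_dist p \<sigma> \<sigma>'\<bar>
        = \<bar>lp_dist p (f \<sigma>) (f \<sigma>') - \<delta> * lp_dist p \<sigma> \<sigma>'\<bar> / \<delta>"
      using T(2) by (simp add: abs_divide)
    also have "\<dots> \<le> 2 * (\<delta> / (8 * real m)) / \<delta>"
      using f that T(2) by (intro divide_right_mono) (auto simp: less_imp_le)
    also have "\<dots> = 1 / (4 * real m)"
      using T(2) by simp
    finally show ?thesis .
  qed
  show "\<exists>u>0. \<exists>f. f ` grid m \<subseteq> F \<and> almost_isometric_grid p m u f"
  proof (intro exI[of _ "1 / \<delta>"] conjI exI[of _ f])
    show "0 < 1 / \<delta>"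
      using T(2) by simp
    show "f ` grid m \<subseteq> F"
      using f T(1) by blast
    show "almost_isometric_grid p m (1 / \<delta>) f"
      unfolding almost_isometric_grid_def using distortion by blast
  qed
qed


context lp_exponent
begin

lemma assouad_dim_eq_UNIV_iff_cube_dense:
  fixes F :: "(real ^ 'n) set"
  shows "assouad_dim p F = assouad_dim p (UNIV :: (real ^ 'n) set) \<longleftrightarrow> cube_dense p F"
proof
  assume eq: "assouad_dim p F = assouad_dim p (UNIV :: (real ^ 'n) set)"
  show "cube_dense p F"
  proof (rule ccontr)
    assume "\<not> cube_dense p F"
    then have "assouad_dim p F < real CARD('n)"
      by (rule assouad_dim_less_card_if_not_cube_dense)
    then show False
      using eq assouad_dim_UNIV[where 'n='n] by simp
  qed
next
  assume "cube_dense p F"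
  then have "approximates_grids p F"
    by (intro approximates_grids_if_in_pc in_pc_if_in_tpc in_tpc_if_cube_dense)
  then show "assouad_dim p F = assouad_dim p (UNIV :: (real ^ 'n) set)"
    unfolding assouad_dim_UNIV by (rule assouad_dim_eq_card_if_approximates_grids)
qed

end

theorem corollary5p9:
  fixes p :: ereal and F :: "(real ^ 'n) set"
  assumes "1 \<le> p"
  shows "(assouad_dim p F = assouad_dim p (UNIV :: (real ^ 'n) set) \<longleftrightarrow> in_pc p F)
       \<and> (in_pc p F \<longleftrightarrow> in_tpc p F)
       \<and> (in_tpc p F \<longleftrightarrow> in_kpc p F)
       \<and> (in_kpc p F \<longleftrightarrow> asymptotic_steinhaus p F)"
proof -
  interpret lp_exponent p
    using assms by unfold_locales
  have pc: "in_pc p F \<longleftrightarrow> cube_dense p F"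
    using cube_dense_if_approximates_grids[OF approximates_grids_if_in_pc]
      in_pc_if_in_tpc[OF in_tpc_if_cube_dense] by blast
  have tpc: "in_tpc p F \<longleftrightarrow> cube_dense p F"
    using pc in_pc_if_in_tpc in_tpc_if_cube_dense by blast
  have kpc: "in_kpc p F \<longleftrightarrow> cube_dense p F"
    using pc in_pc_if_in_kpc in_kpc_if_cube_dense by blast
  have steinhaus: "asymptotic_steinhaus p F \<longleftrightarrow> cube_dense p F"
    using cube_dense_if_approximates_grids[OF approximates_grids_if_asymptotic_steinhaus]
      asymptotic_steinhaus_if_cube_dense by blast
  show ?thesis
    using assouad_dim_eq_UNIV_iff_cube_dense[of F] pc tpc kpc steinhaus by blast
qed

end
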